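(* Let $M\le N$ and let $P\in M_M(M_N(\mathbb C))$ be a submagic matrix whose entries $P_{ij}$ are rank one projections. The following are equivalent: (1) the projections $P_{ij}$ pairwise commute; (2) $P$ comes from a pre-Latin square, i.e. there exist a pre-Latin square $L\in M_M(\{1,\ldots,N\})$ and an orthogonal basis $\xi_1,\ldots,\xi_N$ of $\mathbb C^N$ with $P_{ij}=\mathrm{Proj}(\xi_{L_{ij}})$ for all $i,j$. Moreover, in this case, the bialgebra image of $\pi_P:\widetilde A_s(M)\to M_N(\mathbb C)$, $u_{ij}\mapsto P_{ij}$, is $C(G)$, where $G\subset\widetilde S_M$ is the semigroup associated to $L$, with $u_{ij}$ mapped to the function $\sigma\mapsto1$ if $\sigma(j)=i$ and $0$ otherwise.
   Context: A submagic matrix is a square matrix whose entries are orthogonal projections, pairwise orthogonal within each row and within each column. $\widetilde A_s(M)$ is the universal unital $C^*$-algebra generated by the entries $u_{ij}$ of an $M\times M$ submagic matrix, with comultiplication $\Delta(u_{ij})=\sum_k u_{ik}\otimes u_{kj}$. $\mathrm{Proj}(\xi)$ is the orthogonal projection onto $\mathbb C\xi$. A pre-Latin square is a matrix $L\in M_M(\{1,\ldots,N\})$ whose entries are distinct within each row and within each column. $\widetilde S_M$ is the semigroup of partial permutations of $\{1,\ldots,M\}$ (bijections $X\to Y$ with $X,Y\subset\{1,\ldots,M\}$), with product $(\sigma\tau)(j)=\sigma(\tau(j))$ when defined. For $x\in\{1,\ldots,N\}$, $\sigma_x\in\widetilde S_M$ is defined by $\sigma_x(j)=i\iff L_{ij}=x$;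 the semigroup associated to $L$ is the subsemigroup of $\widetilde S_M$ generated by $\sigma_1,\ldots,\sigma_N$, and $C(G)$ has comultiplication $\Delta(f)(\sigma,\tau)=f(\sigma\tau)$. The bialgebra image of $\pi_P$ is the minimal factorization of $\pi_P$ (restricted to the $*$-algebra generated by the $u_{ij}$) as a surjective comultiplication-preserving unital $*$-homomorphism onto a unital $*$-algebra with comultiplication followed by a $*$-homomorphism to $M_N(\mathbb C)$, minimal in the sense that any other such factorization maps uniquely onto it compatibly with the quotient maps. *)

theory Defs
  imports Main "Jordan_Normal_Form.Schur_Decomposition" "Jordan_Normal_Form.DL_Rank"
begin

text \<open>Indices are 1-based: rows/columns of the M x M submagic matrix range over {1..M},
  labels of the pre-Latin square over {1..N}.  Entries of C^N vectors and of
  N x N matrices are indexed 0..N-1 as in Jordan_Normal_Form.\<close>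

definition orth_projection :: "nat \<Rightarrow> complex mat \<Rightarrow> bool" where
  "orth_projection N Q \<longleftrightarrow> Q \<in> carrier_mat N N \<and> Q * Q = Q \<and> mat_adjoint Q = Q"

definition rank_one_projection :: "nat \<Rightarrow> complex mat \<Rightarrow> bool" where
  "rank_one_projection N Q \<longleftrightarrow> orth_projection N Q \<and> vec_space.rank N Q = 1"

definition submagic :: "nat \<Rightarrow> nat \<Rightarrow> (nat \<Rightarrow> nat \<Rightarrow> complex mat) \<Rightarrow> bool" where
  "submagic M N P \<longleftrightarrow>
     (\<forall>i\<in>{1..M}. \<forall>j\<in>{1..M}. orth_projection N (P i j)) \<and>
     (\<forall>i\<in>{1..M}. \<forall>j\<in>{1..M}. \<forall>k\<in>{1..M}. j \<noteq> k \<longrightarrow> P i j * P i k = 0\<^sub>m N N) \<and>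
     (\<forall>i\<in>{1..M}. \<forall>j\<in>{1..M}. \<forall>k\<in>{1..M}. i \<noteq> k \<longrightarrow> P i j * P k j = 0\<^sub>m N N)"

definition Proj :: "nat \<Rightarrow> complex vec \<Rightarrow> complex mat" where
  "Proj N \<xi> = (1 / (\<xi> \<bullet>c \<xi>)) \<cdot>\<^sub>m mat N N (\<lambda>(r, c). \<xi> $ r * cnj (\<xi> $ c))"

definition orthogonal_basis :: "nat \<Rightarrow> (nat \<Rightarrow> complex vec) \<Rightarrow> bool" where
  "orthogonal_basis N \<xi> \<longleftrightarrow>
     (\<forall>x\<in>{1..N}. \<xi> x \<in> carrier_vec N \<and> \<xi> x \<noteq> 0\<^sub>v N) \<and>
     (\<forall>x\<in>{1..N}. \<forall>y\<in>{1..N}. x \<noteq> y \<longrightarrow> \<xi> x \<bullet>c \<xi> y = 0) \<and>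
     (\<forall>v\<in>carrier_vec N. \<exists>c :: nat \<Rightarrow> complex.
         v = vec N (\<lambda>r. \<Sum>x\<in>{1..N}. c x * (\<xi> x $ r)))"

definition pre_latin_square :: "nat \<Rightarrow> nat \<Rightarrow> (nat \<Rightarrow> nat \<Rightarrow> nat) \<Rightarrow> bool" where
  "pre_latin_square M N L \<longleftrightarrow>
     (\<forall>i\<in>{1..M}. \<forall>j\<in>{1..M}. L i j \<in> {1..N}) \<and>
     (\<forall>i\<in>{1..M}. \<forall>j\<in>{1..M}. \<forall>k\<in>{1..M}. j \<noteq> k \<longrightarrow> L i j \<noteq> L i k) \<and>
     (\<forall>i\<in>{1..M}. \<forall>j\<in>{1..M}. \<forall>k\<in>{1..M}. i \<noteq> k \<longrightarrow> L i j \<noteq> L k j)"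

text \<open>A partial permutation of {1..M} is an injective partial map with domain and range in {1..M};
  the product is (sigma tau)(j) = sigma(tau(j)) when defined, i.e. map composition.\<close>
definition partial_perm :: "nat \<Rightarrow> (nat \<rightharpoonup> nat) \<Rightarrow> bool" where
  "partial_perm M \<sigma> \<longleftrightarrow> dom \<sigma> \<subseteq> {1..M} \<and> ran \<sigma> \<subseteq> {1..M} \<and> inj_on \<sigma> (dom \<sigma>)"

text \<open>sigma_x(j) = i iff L_ij = x.\<close>
definition sigma_L :: "nat \<Rightarrow> (nat \<Rightarrow> nat \<Rightarrow> nat) \<Rightarrow> nat \<Rightarrow> (nat \<rightharpoonup> nat)" where
  "sigma_L M L x = (\<lambda>j. if j \<in> {1..M} \<and> (\<exists>i\<in>{1..M}. L i j = x)
                         then Some (THE i. i \<in> {1..M} \<and> L i j = x) else None)"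

inductive_set assoc_semigroup :: "nat \<Rightarrow> nat \<Rightarrow> (nat \<Rightarrow> nat \<Rightarrow> nat) \<Rightarrow> (nat \<rightharpoonup> nat) set"
  for M N L where
  gen: "x \<in> {1..N} \<Longrightarrow> sigma_L M L x \<in> assoc_semigroup M N L"
| mult: "\<sigma> \<in> assoc_semigroup M N L \<Longrightarrow> \<tau> \<in> assoc_semigroup M N L \<Longrightarrow> (\<sigma> \<circ>\<^sub>m \<tau>) \<in> assoc_semigroup M N L"

text \<open>Elements of the free unital *-algebra on self-adjoint generators u_ij (i,j in {1..M}):
  finitely supported coefficient functions on words.  The word [(i1,j1),...,(ik,jk)] stands for
  u_{i1 j1} ... u_{ik jk}; the empty word is the unit.  The *-algebra generated by the u_ij in
  the universal algebra is the quotient of this by an ideal containing the submagic relations.\<close>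
type_synonym word = "(nat \<times> nat) list"
type_synonym falg = "word \<Rightarrow> complex"
type_synonym ftens = "word \<times> word \<Rightarrow> complex"

definition falg_carrier :: "nat \<Rightarrow> falg set" where
  "falg_carrier M = {f. finite {w. f w \<noteq> 0} \<and> (\<forall>w. f w \<noteq> 0 \<longrightarrow> set w \<subseteq> {1..M} \<times> {1..M})}"

definition falg_gen :: "nat \<Rightarrow> nat \<Rightarrow> falg" where
  "falg_gen i j = (\<lambda>w. if w = [(i, j)] then 1 else 0)"

definition falg_add :: "falg \<Rightarrow> falg \<Rightarrow> falg" where
  "falg_add f g = (\<lambda>w. f w + g w)"

definition falg_smult :: "complex \<Rightarrow> falg \<Rightarrow> falg" where
  "falg_smult c f = (\<lambda>w. c * f w)"

definition falg_mult :: "falg \<Rightarrow> falg \<Rightarrow> falg" where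
  "falg_mult f g = (\<lambda>w. \<Sum>k\<in>{0..length w}. f (take k w) * g (drop k w))"

text \<open>Involution: u_ij^* = u_ij, so (u_{w1}...u_{wk})^* = u_{wk}...u_{w1}.\<close>
definition falg_star :: "falg \<Rightarrow> falg" where
  "falg_star f = (\<lambda>w. cnj (f (rev w)))"

definition tens :: "falg \<Rightarrow> falg \<Rightarrow> ftens" where
  "tens f g = (\<lambda>(a, b). f a * g b)"

definition coideal_target :: "nat \<Rightarrow> falg set \<Rightarrow> ftens set" where
  "coideal_target M I = {t. \<exists>n (x :: nat \<Rightarrow> falg) (y :: nat \<Rightarrow> falg).
       (\<forall>k<n. x k \<in> falg_carrier M \<and> y k \<in> falg_carrier M \<and> (x k \<in> I \<or> y k \<in> I)) \<and>
       t = (\<lambda>p. \<Sum>k<n. tens (x k) (y k) p)}"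

text \<open>Comultiplication Delta(u_ij) = sum_l u_il (x) u_lj, extended multiplicatively:
  Delta(u_{i1 j1}...u_{ik jk}) = sum_{l_1..l_k} u_{i1 l1}...u_{ik lk} (x) u_{l1 j1}...u_{lk jk}.
  Hence the coefficient of a (x) b in Delta(f) is f(w) where w_t = (fst a_t, snd b_t),
  provided snd a_t = fst b_t \<in> {1..M} for all t, and 0 otherwise.\<close>
definition falg_comult :: "nat \<Rightarrow> falg \<Rightarrow> ftens" where
  "falg_comult M f = (\<lambda>(a, b).
     if length a = length b \<and> (\<forall>t<length a. snd (a ! t) = fst (b ! t) \<and> snd (a ! t) \<in> {1..M})
     then f (map2 (\<lambda>x y. (fst x, snd y)) a b) else 0)"

definition word_mat :: "nat \<Rightarrow> (nat \<Rightarrow> nat \<Rightarrow> complex mat) \<Rightarrow> word \<Rightarrow> complex mat" where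
  "word_mat N P w = foldr (\<lambda>l acc. P (fst l) (snd l) * acc) w (1\<^sub>m N)"

definition pi_P :: "nat \<Rightarrow> (nat \<Rightarrow> nat \<Rightarrow> complex mat) \<Rightarrow> falg \<Rightarrow> complex mat" where
  "pi_P N P f = mat N N (\<lambda>(r, c). \<Sum>w\<in>{w. f w \<noteq> 0}. f w * (word_mat N P w $$ (r, c)))"

definition chi_word :: "word \<Rightarrow> (nat \<rightharpoonup> nat) \<Rightarrow> complex" where
  "chi_word w \<sigma> = (\<Prod>t<length w. if \<sigma> (snd (w ! t)) = Some (fst (w ! t)) then 1 else 0)"

definition rho :: "falg \<Rightarrow> (nat \<rightharpoonup> nat) \<Rightarrow> complex" where
  "rho f \<sigma> = (\<Sum>w\<in>{w. f w \<noteq> 0}. f w * chi_word w \<sigma>)"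

text \<open>Kernels of factorizations A -> B -> M_N(C) of pi_P through a surjective unital
  comultiplication-preserving *-homomorphism A -> B: *-ideals I of A (A = *-algebra generated by
  submagic u_ij, i.e. ideals of the free algebra containing the submagic relations) which are
  coideals (Delta(I) \<subseteq> I (x) A + A (x) I) and are contained in ker pi_P.\<close>
definition admissible_ideal :: "nat \<Rightarrow> nat \<Rightarrow> (nat \<Rightarrow> nat \<Rightarrow> complex mat) \<Rightarrow> falg set \<Rightarrow> bool" where
  "admissible_ideal M N P I \<longleftrightarrow>
     I \<subseteq> falg_carrier M \<and> (\<lambda>w. 0) \<in> I \<and>
     (\<forall>f\<in>I. \<forall>g\<in>I. falg_add f g \<in> I) \<and>
     (\<forall>c. \<forall>f\<in>I. falg_smult c f \<in> I) \<and>
     (\<forall>f\<in>I. \<forall>g\<in>falg_carrier M. falg_mult f g \<in> I \<and> falg_mult g f \<in> I) \<and>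
     (\<forall>f\<in>I. falg_star f \<in> I) \<and>
     (\<forall>i\<in>{1..M}. \<forall>j\<in>{1..M}.
         falg_add (falg_mult (falg_gen i j) (falg_gen i j)) (falg_smult (-1) (falg_gen i j)) \<in> I) \<and>
     (\<forall>i\<in>{1..M}. \<forall>j\<in>{1..M}. \<forall>k\<in>{1..M}. j \<noteq> k \<longrightarrow> falg_mult (falg_gen i j) (falg_gen i k) \<in> I) \<and>
     (\<forall>i\<in>{1..M}. \<forall>j\<in>{1..M}. \<forall>k\<in>{1..M}. i \<noteq> k \<longrightarrow> falg_mult (falg_gen i j) (falg_gen k j) \<in> I) \<and>
     (\<forall>f\<in>I. falg_comult M f \<in> coideal_target M I) \<and>
     (\<forall>f\<in>I. pi_P N P f = 0\<^sub>m N N)"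

text \<open>The bialgebra image of pi_P is C(G) with u_ij \<mapsto> chi_{sigma(j)=i}:
  rho maps A onto C(G), intertwines Delta with Delta(h)(sigma,tau) = h(sigma tau),
  and its kernel is the largest admissible ideal (i.e. A -> C(G) -> M_N(C) is the minimal
  factorization).\<close>
definition bialgebra_image_is_CG ::
  "nat \<Rightarrow> nat \<Rightarrow> (nat \<Rightarrow> nat \<Rightarrow> complex mat) \<Rightarrow> (nat \<rightharpoonup> nat) set \<Rightarrow> bool" where
  "bialgebra_image_is_CG M N P G \<longleftrightarrow>
     (\<forall>h :: (nat \<rightharpoonup> nat) \<Rightarrow> complex. \<exists>f\<in>falg_carrier M. \<forall>\<sigma>\<in>G. rho f \<sigma> = h \<sigma>) \<and>
     (\<forall>f\<in>falg_carrier M. \<forall>\<sigma>\<in>G. \<forall>\<tau>\<in>G.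
        rho f (\<sigma> \<circ>\<^sub>m \<tau>) =
        (\<Sum>p\<in>{p. falg_comult M f p \<noteq> 0}.
            falg_comult M f p * chi_word (fst p) \<sigma> * chi_word (snd p) \<tau>)) \<and>
     admissible_ideal M N P {f\<in>falg_carrier M. \<forall>\<sigma>\<in>G. rho f \<sigma> = 0} \<and>
     (\<forall>I. admissible_ideal M N P I \<longrightarrow> I \<subseteq> {f\<in>falg_carrier M. \<forall>\<sigma>\<in>G. rho f \<sigma> = 0})"

end

theory Submission
  imports Defs
begin

text \<open>
  A rank-one projection is Proj v for a nonzero vector v, and two commuting rank-one projections
  are either equal or have orthogonal ranges. Hence if the entries of P commute, their distinct
  values are the projections onto pairwise orthogonal lines; completing spanning vectors of these
  lines to an orthogonal basis and labelling every entry by the index of its vector yields L, whose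
  rows and columns have distinct labels because entries sharing a row or a column multiply to zero.

  For the bialgebra image, write rho for the evaluation u_ij \<mapsto> (\<sigma> \<mapsto> [\<sigma>(j) = i]). In the basis
  \<xi> one has pi_P(u_w) = \<Sigma>_x rho(u_w)(\<sigma>_x) Proj(\<xi>_x), and the Proj(\<xi>_x) are linearly
  independent, so f lies in the kernel of pi_P iff rho f vanishes at every \<sigma>_x. Since rho is a
  *-homomorphism turning the comultiplication into composition of partial permutations, every
  coideal inside the kernel of pi_P is annihilated by rho on all products of the \<sigma>_x, i.e. on G.
  Conversely the kernel of rho on G is itself such a coideal: subtracting from each word its
  interpolation polynomial on G splits every term of the comultiplication into tensors with a
  factor in the kernel, plus a remainder whose total is a combination of values of rho f on G,
  hence zero. Finally rho maps onto C(G), since polynomials in the u_ij separate the finitely many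
  points of G.
\<close>

section \<open>Rank-one projections\<close>

lemma conjugate_complex_eq_cnj [simp]: "conjugate (z::complex) = cnj z"
  by (simp add: conjugate_complex_def)

lemma cscalar_prod_eq_sum:
  assumes "(\<xi>::complex vec) \<in> carrier_vec N" "\<eta> \<in> carrier_vec N"
  shows "\<xi> \<bullet>c \<eta> = (\<Sum>i<N. \<xi>$i * cnj (\<eta>$i))"
  using assms unfolding scalar_prod_def by (auto intro!: sum.cong simp: lessThan_atLeast0)

lemma cscalar_prod_swap:
  assumes "(\<xi>::complex vec) \<in> carrier_vec N" "\<eta> \<in> carrier_vec N"
  shows "\<eta> \<bullet>c \<xi> = cnj (\<xi> \<bullet>c \<eta>)"
  using assms by (simp add: cscalar_prod_eq_sum mult.commute)

lemma cscalar_prod_self_neq_0: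
  assumes "(\<xi>::complex vec) \<in> carrier_vec N" "\<xi> \<noteq> 0\<^sub>v N"
  shows "\<xi> \<bullet>c \<xi> \<noteq> 0"
  using assms conjugate_square_eq_0_vec by blast

lemma nonzero_vec_entry:
  assumes "(v::'a::zero vec) \<in> carrier_vec N" "v \<noteq> 0\<^sub>v N"
  obtains r where "r < N" "v $ r \<noteq> 0"
  using assms by (metis carrier_vecD eq_vecI index_zero_vec(1,2))

lemma Proj_carrier [simp]: "Proj N \<xi> \<in> carrier_mat N N"
  unfolding Proj_def by auto

lemma Proj_dims [simp]: "dim_row (Proj N \<xi>) = N" "dim_col (Proj N \<xi>) = N"
  unfolding Proj_def by auto

lemma Proj_index:
  assumes "r < N" "c < N"
  shows "Proj N \<xi> $$ (r,c) = \<xi>$r * cnj (\<xi>$c) / (\<xi> \<bullet>c \<xi>)"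
  using assms unfolding Proj_def by auto

lemma Proj_mult_Proj:
  assumes "(\<xi>::complex vec) \<in> carrier_vec N" "\<eta> \<in> carrier_vec N"
  shows "Proj N \<xi> * Proj N \<eta> =
     mat N N (\<lambda>(r,c). \<xi>$r * cnj (\<eta>$c) * (\<eta> \<bullet>c \<xi>) / ((\<xi> \<bullet>c \<xi>) * (\<eta> \<bullet>c \<eta>)))"
    (is "_ = ?R")
proof (rule eq_matI)
  fix r c assume "r < dim_row ?R" "c < dim_col ?R"
  hence r: "r < N" and c: "c < N" by auto
  have "(Proj N \<xi> * Proj N \<eta>) $$ (r,c) = (\<Sum>k<N. Proj N \<xi> $$ (r,k) * Proj N \<eta> $$ (k,c))"
    using r c by (simp add: scalar_prod_def lessThan_atLeast0)
  also have "\<dots> = (\<Sum>k<N. (\<xi>$r * cnj (\<eta>$c) / ((\<xi> \<bullet>c \<xi>) * (\<eta> \<bullet>c \<eta>))) * (\<eta>$k * cnj (\<xi>$k)))"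
    using r c by (intro sum.cong) (auto simp: Proj_index)
  also have "\<dots> = (\<xi>$r * cnj (\<eta>$c) / ((\<xi> \<bullet>c \<xi>) * (\<eta> \<bullet>c \<eta>))) * (\<eta> \<bullet>c \<xi>)"
    using assms by (simp add: sum_distrib_left cscalar_prod_eq_sum)
  finally show "(Proj N \<xi> * Proj N \<eta>) $$ (r,c) = ?R $$ (r,c)"
    using r c by simp
qed auto

lemma Proj_mult_orthogonal:
  assumes "(\<xi>::complex vec) \<in> carrier_vec N" "\<eta> \<in> carrier_vec N" "\<xi> \<bullet>c \<eta> = 0"
  shows "Proj N \<xi> * Proj N \<eta> = 0\<^sub>m N N"
proof -
  have "\<eta> \<bullet>c \<xi> = 0" using cscalar_prod_swap[OF assms(1,2)] assms(3) by simp
  then show ?thesis unfolding Proj_mult_Proj[OF assms(1,2)] by (intro eq_matI) auto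
qed

lemma Proj_idem:
  assumes "(\<xi>::complex vec) \<in> carrier_vec N" "\<xi> \<noteq> 0\<^sub>v N"
  shows "Proj N \<xi> * Proj N \<xi> = Proj N \<xi>"
proof -
  have "\<xi> \<bullet>c \<xi> \<noteq> 0" using cscalar_prod_self_neq_0 assms by blast
  then show ?thesis unfolding Proj_mult_Proj[OF assms(1) assms(1)]
    by (intro eq_matI) (auto simp: Proj_index)
qed

lemma Proj_smult:
  assumes "(\<xi>::complex vec) \<in> carrier_vec N" "a \<noteq> 0"
  shows "Proj N (a \<cdot>\<^sub>v \<xi>) = Proj N \<xi>"
proof (rule eq_matI)
  fix i j assume "i < dim_row (Proj N \<xi>)" "j < dim_col (Proj N \<xi>)"
  then have ij: "i < N" "j < N" by auto
  have aa: "a * cnj a \<noteq> 0" using assms by simp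
  have "(a \<cdot>\<^sub>v \<xi>) \<bullet>c (a \<cdot>\<^sub>v \<xi>) = (a * cnj a) * (\<xi> \<bullet>c \<xi>)"
    using assms by (simp add: cscalar_prod_eq_sum sum_distrib_left algebra_simps)
  then have "Proj N (a \<cdot>\<^sub>v \<xi>) $$ (i,j) = (a * cnj a) * (\<xi>$i * cnj (\<xi>$j)) / ((a * cnj a) * (\<xi> \<bullet>c \<xi>))"
    using assms ij by (simp add: Proj_index algebra_simps)
  also have "\<dots> = Proj N \<xi> $$ (i,j)" using ij aa by (simp add: Proj_index)
  finally show "Proj N (a \<cdot>\<^sub>v \<xi>) $$ (i,j) = Proj N \<xi> $$ (i,j)" .
qed auto

lemma Proj_neq_0:
  assumes "(\<xi>::complex vec) \<in> carrier_vec N" "\<xi> \<noteq> 0\<^sub>v N"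
  shows "Proj N \<xi> \<noteq> 0\<^sub>m N N"
proof
  assume z: "Proj N \<xi> = 0\<^sub>m N N"
  obtain r where r: "r < N" "\<xi>$r \<noteq> 0" using nonzero_vec_entry assms by blast
  have "\<xi> \<bullet>c \<xi> \<noteq> 0" using cscalar_prod_self_neq_0 assms by blast
  moreover have "Proj N \<xi> $$ (r,r) = 0" using z r by simp
  ultimately show False using r by (simp add: Proj_index)
qed

lemma rank_one_cols_multiple:
  assumes Q: "(Q::complex mat) \<in> carrier_mat N N" and r: "vec_space.rank N Q = 1"
  obtains v where "v \<in> carrier_vec N" "v \<noteq> 0\<^sub>v N" "\<And>j. j < N \<Longrightarrow> \<exists>a. col Q j = a \<cdot>\<^sub>v v"
proof -
  interpret vec_space "TYPE(complex)" N .
  obtain j0 where j0: "j0 < N" "col Q j0 \<noteq> 0\<^sub>v N"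
  proof (rule ccontr)
    assume "\<not> thesis"
    with that have "Q = 0\<^sub>m N N" using Q
      by (intro eq_matI) (auto, metis col_def index_vec index_zero_vec(1) carrier_matD)
    then show False using r rank_0I by simp
  qed
  define v where "v = col Q j0"
  have v: "v \<in> carrier_vec N" "v \<noteq> 0\<^sub>v N" using j0 Q unfolding v_def by auto
  have vcols: "v \<in> set (cols Q)" using j0 Q unfolding v_def by (simp add: cols_def)
  have li1: "lin_indpt {v}"
    using lin_dep_iff_in_span[of "{}" v] v span_empty by (auto simp: lin_dep_def)
  have "\<exists>a. col Q j = a \<cdot>\<^sub>v v" if j: "j < N" for j
  proof -
    define c where "c = col Q j"
    have c: "c \<in> carrier_vec N" "c \<in> set (cols Q)" using j Q unfolding c_def by (auto simp: cols_def)
    have "c \<in> span {v}"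
    proof (rule ccontr)
      assume nc: "c \<notin> span {v}"
      have cv: "c \<noteq> v" using nc span_self v by auto
      have "lin_indpt ({v} \<union> {c})" using lin_dep_iff_in_span[of "{v}" c] nc v c li1 cv by auto
      hence "rank Q \<ge> card ({v} \<union> {c})"
        using rank_ge_card_indpt[OF Q, of "{v} \<union> {c}"] vcols c by auto
      thus False using r cv by simp
    qed
    then obtain a A where aA: "c = lincomb a A" "finite A" "A \<subseteq> {v}" using in_spanE by blast
    show ?thesis
    proof (cases "A = {}")
      case True
      then show ?thesis using aA v unfolding c_def by (intro exI[of _ 0]) auto
    next
      case False
      then have "A = {v}" using aA by auto
      then show ?thesis using aA v unfolding c_def lincomb_def by auto
    qed
  qed
  then show thesis using that v by blast
qed

lemma selfadjoint_rank_one_eq_outer: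
  assumes Q: "(Q::complex mat) \<in> carrier_mat N N" and adj: "mat_adjoint Q = Q"
    and r: "vec_space.rank N Q = 1"
  obtains v \<beta> where "v \<in> carrier_vec N" "v \<noteq> 0\<^sub>v N"
    "\<And>r c. r < N \<Longrightarrow> c < N \<Longrightarrow> Q $$ (r,c) = \<beta> * (v $ r * cnj (v $ c))"
proof -
  obtain v where v: "v \<in> carrier_vec N" "v \<noteq> 0\<^sub>v N" and "\<And>j. j < N \<Longrightarrow> \<exists>a. col Q j = a \<cdot>\<^sub>v v"
    using rank_one_cols_multiple[OF Q r] by blast
  then obtain a where a: "\<And>j. j < N \<Longrightarrow> col Q j = a j \<cdot>\<^sub>v v" by metis
  have Qe: "Q $$ (r,c) = a c * v $ r" if "r < N" "c < N" for r c
    using a[OF that(2)] v that Q by (metis carrier_matD(1) carrier_vecD col_def index_smult_vec(1) index_vec)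
  have sa: "Q $$ (r,c) = cnj (Q $$ (c,r))" if "r < N" "c < N" for r c
  proof -
    have "mat_adjoint Q $$ (r,c) = cnj (Q $$ (c,r))"
      using Q that unfolding mat_adjoint_def by (simp add: mat_of_rows_def cols_def)
    then show ?thesis using adj by simp
  qed
  obtain r0 where r0: "r0 < N" "v $ r0 \<noteq> 0" using nonzero_vec_entry v by blast
  have "Q $$ (r,c) = (cnj (a r0) / v $ r0) * (v $ r * cnj (v $ c))" if "r < N" "c < N" for r c
  proof -
    have "a c * v $ r0 = cnj (a r0 * v $ c)" using sa[OF r0(1) that(2)] Qe r0 that by simp
    hence "a c = (cnj (a r0) / v $ r0) * cnj (v $ c)" using r0 by (simp add: field_simps)
    thus ?thesis using Qe[OF that] by simp
  qed
  then show thesis using that v by blast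
qed

lemma rank_one_projection_eq_Proj:
  assumes "rank_one_projection N Q"
  obtains v where "v \<in> carrier_vec N" "v \<noteq> 0\<^sub>v N" "Q = Proj N v"
proof -
  have Q: "Q \<in> carrier_mat N N" and idem: "Q * Q = Q" and adj: "mat_adjoint Q = Q"
    and r: "vec_space.rank N Q = 1"
    using assms unfolding rank_one_projection_def orth_projection_def by auto
  obtain v \<beta> where v: "v \<in> carrier_vec N" "v \<noteq> 0\<^sub>v N"
    and Qb: "\<And>r c. r < N \<Longrightarrow> c < N \<Longrightarrow> Q $$ (r,c) = \<beta> * (v $ r * cnj (v $ c))"
    using selfadjoint_rank_one_eq_outer[OF Q adj r] by blast
  obtain r0 where r0: "r0 < N" "v $ r0 \<noteq> 0" using nonzero_vec_entry v by blast
  have vv: "v \<bullet>c v \<noteq> 0" using cscalar_prod_self_neq_0 v by blast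
  have "\<beta> \<noteq> 0"
  proof
    assume "\<beta> = 0"
    then have "Q = 0\<^sub>m N N" using Q Qb by (intro eq_matI) auto
    then show False using r vec_space.rank_0I by (metis zero_neq_one)
  qed
  text \<open>Idempotency, read at the diagonal entry (r0, r0), forces \<beta> = 1 / (v \<bullet>c v).\<close>
  have "Q $$ (r0,r0) = (Q * Q) $$ (r0,r0)" using idem by simp
  also have "\<dots> = (\<Sum>k<N. Q $$ (r0,k) * Q $$ (k,r0))"
    using Q r0 by (simp add: scalar_prod_def lessThan_atLeast0)
  also have "\<dots> = (\<Sum>k<N. (\<beta> * \<beta> * (v $ r0 * cnj (v $ r0))) * (v $ k * cnj (v $ k)))"
    using r0 by (intro sum.cong) (auto simp: Qb)
  also have "\<dots> = (\<beta> * \<beta> * (v $ r0 * cnj (v $ r0))) * (v \<bullet>c v)"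
    using v by (simp add: sum_distrib_left cscalar_prod_eq_sum)
  finally have "(\<beta> * (v $ r0 * cnj (v $ r0))) * 1 = (\<beta> * (v $ r0 * cnj (v $ r0))) * (\<beta> * (v \<bullet>c v))"
    using Qb r0 by (simp add: algebra_simps)
  then have "\<beta> * (v \<bullet>c v) = 1" using \<open>\<beta> \<noteq> 0\<close> r0 by (metis mult_left_cancel no_zero_divisors complex_cnj_zero_iff)
  then have "\<beta> = 1 / (v \<bullet>c v)" using vv by (simp add: field_simps)
  then have "Q = Proj N v" using Q Qb by (intro eq_matI) (auto simp: Proj_index)
  then show thesis using that v by blast
qed

lemma commuting_Proj_eq_or_orthogonal:
  assumes v: "(v::complex vec) \<in> carrier_vec N" "v \<noteq> 0\<^sub>v N"
    and w: "w \<in> carrier_vec N" "w \<noteq> 0\<^sub>v N"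
    and comm: "Proj N v * Proj N w = Proj N w * Proj N v"
  shows "Proj N v = Proj N w \<or> v \<bullet>c w = 0"
proof (cases "w \<bullet>c v = 0")
  case True
  then show ?thesis using cscalar_prod_swap[OF w(1) v(1)] by simp
next
  case False
  define d where "d = w \<bullet>c v"
  have d: "d \<noteq> 0" using False d_def by simp
  have vw: "v \<bullet>c w = cnj d" using cscalar_prod_swap[OF v(1) w(1)] d_def by simp
  have nv: "v \<bullet>c v \<noteq> 0" and nw: "w \<bullet>c w \<noteq> 0" using cscalar_prod_self_neq_0 v w by blast+
  have ent: "v $ r * cnj (w $ c) * d = w $ r * cnj (v $ c) * cnj d" if "r < N" "c < N" for r c
  proof -
    have "(Proj N v * Proj N w) $$ (r,c) = (Proj N w * Proj N v) $$ (r,c)" using comm by simp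
    then show ?thesis
      unfolding Proj_mult_Proj[OF v(1) w(1)] Proj_mult_Proj[OF w(1) v(1)]
      using that vw d_def nv nw by (simp add: field_simps)
  qed
  obtain c0 where c0: "c0 < N" "v $ c0 \<noteq> 0" using nonzero_vec_entry v by blast
  text \<open>Reading the commutator at column c0 shows that w is a multiple of v.\<close>
  define s where "s = cnj (w $ c0) * d / (cnj (v $ c0) * cnj d)"
  have w_eq: "w = s \<cdot>\<^sub>v v"
  proof (rule eq_vecI)
    fix r assume "r < dim_vec (s \<cdot>\<^sub>v v)"
    then have r: "r < N" using v by simp
    have "w $ r = v $ r * cnj (w $ c0) * d / (cnj (v $ c0) * cnj d)"
      using ent[OF r c0(1)] c0 d by (simp add: field_simps)
    then show "w $ r = (s \<cdot>\<^sub>v v) $ r" using r v unfolding s_def by simp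
  qed (use v w in simp)
  then have "s \<noteq> 0" using w v by auto
  then show ?thesis using w_eq Proj_smult[OF v(1)] by simp
qed

section \<open>Orthogonal bases from orthogonal lists\<close>

lemma corthogonal_lin_indpt:
  assumes us: "set us \<subseteq> carrier_vec N" and orth: "corthogonal (us :: complex vec list)"
  shows "\<not> module.lin_dep class_ring (module_vec TYPE(complex) N) (set us)"
proof
  interpret vec_space "TYPE(complex)" N .
  assume "lin_dep (set us)"
  then obtain A a v where A: "finite A" "A \<subseteq> set us" "lincomb a A = 0\<^sub>v N" "v \<in> A" "a v \<noteq> 0"
    unfolding lin_dep_def by auto
  have vc: "v \<in> carrier_vec N" using A us by auto
  have cvc: "conjugate v \<in> carrier_vec N" using vc by simp
  have Ac: "(\<lambda>u. a u \<cdot>\<^sub>v u) \<in> A \<rightarrow> carrier_vec N" using A us by auto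
  have "0 = lincomb a A \<bullet> conjugate v" using A(3) cvc by simp
  also have "\<dots> = (\<Sum>u\<in>A. (a u \<cdot>\<^sub>v u) \<bullet> conjugate v)"
    unfolding lincomb_def using finsum_scalar_prod_sum[OF Ac cvc] by simp
  also have "\<dots> = (\<Sum>u\<in>A. a u * (u \<bullet>c v))"
    using A us cvc by (intro sum.cong) auto
  also have "\<dots> = a v * (v \<bullet>c v) + (\<Sum>u\<in>A-{v}. a u * (u \<bullet>c v))"
    using A by (simp add: sum.remove)
  also have "(\<Sum>u\<in>A-{v}. a u * (u \<bullet>c v)) = 0"
  proof (rule sum.neutral, rule ballI)
    fix u assume u: "u \<in> A - {v}"
    obtain i where i: "i < length us" "us ! i = u" using u A by (metis DiffD1 in_set_conv_nth subsetD)
    obtain j where j: "j < length us" "us ! j = v" using A by (metis in_set_conv_nth subsetD)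
    have "i \<noteq> j" using i j u by auto
    hence "u \<bullet>c v = 0" using corthogonalD[OF orth i(1) j(1)] i j by simp
    thus "a u * (u \<bullet>c v) = 0" by simp
  qed
  finally have "a v * (v \<bullet>c v) = 0" by simp
  moreover have "v \<bullet>c v \<noteq> 0"
  proof -
    obtain j where j: "j < length us" "us ! j = v" using A by (metis in_set_conv_nth subsetD)
    show ?thesis using corthogonalD[OF orth j(1) j(1)] j by simp
  qed
  ultimately show False using A(5) by simp
qed

lemma corthogonal_length_le:
  assumes us: "set us \<subseteq> carrier_vec N" and orth: "corthogonal (us :: complex vec list)"
  shows "length us \<le> N"
proof -
  interpret vec_space "TYPE(complex)" N .
  have "card (set us) \<le> dim" using li_le_dim(2)[OF fin_dim us corthogonal_lin_indpt[OF us orth]] .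
  moreover have "card (set us) = length us" using corthogonal_distinct[OF orth] distinct_card by blast
  ultimately show ?thesis using dim_is_n by simp
qed

lemma corthogonal_extend:
  assumes us: "set us \<subseteq> carrier_vec N" and orth: "corthogonal (us :: complex vec list)"
    and len: "length us < N"
  obtains w where "w \<in> carrier_vec N" "corthogonal (w # us)"
proof -
  interpret cof_vec_space N "TYPE(complex)" .
  have li: "lin_indpt (set us)" using corthogonal_lin_indpt[OF us orth] .
  have dist: "distinct us" using corthogonal_distinct[OF orth] .
  have "span (set us) \<noteq> carrier_vec N"
  proof
    assume "span (set us) = carrier_vec N"
    then have "basis (set us)" unfolding basis_def using li us by simp
    then have "dim = card (set us)" using dim_basis by blast
    then show False using dim_is_n distinct_card[OF dist] len by simp
  qed
  moreover have "span (set us) \<subseteq> carrier_vec N" using span_closed[OF us] by auto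
  ultimately obtain w where w: "w \<in> carrier_vec N" "w \<notin> span (set us)" by auto
  show thesis
    using that adjust_orthogonal[OF us orth w] adjuster_carrier[OF w(1) us dist] w by auto
qed

lemma corthogonal_extend_to_length:
  assumes us: "set us \<subseteq> carrier_vec N" and orth: "corthogonal (us :: complex vec list)"
  shows "\<exists>nw. set nw \<subseteq> carrier_vec N \<and> corthogonal (nw @ us) \<and> length (nw @ us) = N"
  using us orth
proof (induction "N - length us" arbitrary: us)
  case 0
  then show ?case using corthogonal_length_le[OF 0(2,3)] by (intro exI[of _ "[]"]) auto
next
  case (Suc k)
  have "length us < N" using Suc(2) by simp
  then obtain w where w: "w \<in> carrier_vec N" "corthogonal (w # us)"
    using corthogonal_extend[OF Suc(3,4)] by blast
  have "k = N - length (w # us)" using Suc(2) by simp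
  then obtain nw where "set nw \<subseteq> carrier_vec N" "corthogonal (nw @ w # us)" "length (nw @ w # us) = N"
    using Suc(1)[of "w # us"] w Suc(3) by auto
  then show ?case using w by (intro exI[of _ "nw @ [w]"]) auto
qed

lemma cscalar_prod_corthogonal_combination:
  assumes ws: "set ws \<subseteq> carrier_vec N" and orth: "corthogonal (ws :: complex vec list)"
    and len: "length ws = N" and j: "j < N"
  shows "vec N (\<lambda>r. \<Sum>i<N. a i * (ws!i $ r)) \<bullet>c ws!j = a j * (ws!j \<bullet>c ws!j)"
proof -
  have wc: "ws!i \<in> carrier_vec N" if "i < N" for i using ws len that by auto
  have "vec N (\<lambda>r. \<Sum>i<N. a i * (ws!i $ r)) \<bullet>c ws!j = (\<Sum>k<N. \<Sum>i<N. a i * (ws!i $ k * cnj (ws!j $ k)))"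
    using cscalar_prod_eq_sum[OF _ wc[OF j]] by (simp add: sum_distrib_right mult.assoc)
  also have "\<dots> = (\<Sum>i<N. a i * (ws!i \<bullet>c ws!j))"
    by (subst sum.swap) (simp add: sum_distrib_left cscalar_prod_eq_sum[OF wc wc[OF j]])
  also have "\<dots> = (\<Sum>i<N. if i = j then a j * (ws!j \<bullet>c ws!j) else 0)"
    using corthogonalD[OF orth] len j by (intro sum.cong) auto
  finally show ?thesis using j by simp
qed

text \<open>A nonzero vector orthogonal to a complete orthogonal list could be prepended to it,
  contradicting the length bound.\<close>
lemma orthogonal_to_corthogonal_eq_0:
  assumes ws: "set ws \<subseteq> carrier_vec N" and orth: "corthogonal (ws :: complex vec list)"
    and len: "length ws = N" and r: "r \<in> carrier_vec N" and rj: "\<And>j. j < N \<Longrightarrow> r \<bullet>c ws!j = 0"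
  shows "r = 0\<^sub>v N"
proof (rule ccontr)
  assume "r \<noteq> 0\<^sub>v N"
  then have rr: "r \<bullet>c r \<noteq> 0" using cscalar_prod_self_neq_0 r by blast
  have jr: "ws!j \<bullet>c r = 0" if "j < N" for j
  proof -
    have "ws!j \<in> carrier_vec N" using ws len that by auto
    then show ?thesis using cscalar_prod_swap[OF r] rj[OF that] by simp
  qed
  have "corthogonal (r # ws)"
  proof (rule corthogonalI)
    fix i j assume i: "i < length (r # ws)" and j: "j < length (r # ws)"
    show "((r # ws) ! i \<bullet>c (r # ws) ! j = 0) = (i \<noteq> j)"
      using rr rj jr i j len corthogonalD[OF orth] by (cases i; cases j) auto
  qed
  then have "length (r # ws) \<le> N" using corthogonal_length_le r ws by (metis insert_subset list.simps(15))
  then show False using len by simp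
qed

lemma corthogonal_expansion:
  assumes ws: "set ws \<subseteq> carrier_vec N" and orth: "corthogonal (ws :: complex vec list)"
    and len: "length ws = N" and v: "v \<in> carrier_vec N"
  shows "v = vec N (\<lambda>r. \<Sum>i<N. ((v \<bullet>c ws!i) / (ws!i \<bullet>c ws!i)) * (ws!i $ r))"
    (is "v = ?s")
proof -
  have "v - ?s = 0\<^sub>v N"
  proof (rule orthogonal_to_corthogonal_eq_0[OF ws orth len])
    show "v - ?s \<in> carrier_vec N" using v by simp
    fix j assume j: "j < N"
    then have wj: "ws!j \<in> carrier_vec N" and nz: "ws!j \<bullet>c ws!j \<noteq> 0"
      using ws len corthogonalD[OF orth, of j j] by auto
    have "(v - ?s) \<bullet>c ws!j = v \<bullet>c ws!j - ?s \<bullet>c ws!j"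
      using v wj by (simp add: minus_scalar_prod_distrib)
    then show "(v - ?s) \<bullet>c ws!j = 0"
      unfolding cscalar_prod_corthogonal_combination[OF ws orth len j] using nz by simp
  qed
  show ?thesis
  proof (rule eq_vecI)
    fix i assume i: "i < dim_vec ?s"
    then have "(v - ?s) $ i = 0" using \<open>v - ?s = 0\<^sub>v N\<close> by simp
    then show "v $ i = ?s $ i" using i v by simp
  qed (use v in simp)
qed

lemma corthogonal_orthogonal_basis:
  assumes ws: "set ws \<subseteq> carrier_vec N" and orth: "corthogonal (ws :: complex vec list)"
    and len: "length ws = N"
  shows "orthogonal_basis N (\<lambda>x. ws ! (x - 1))"
  unfolding orthogonal_basis_def
proof (intro conjI ballI impI)
  fix x assume "x \<in> {1..N}"
  then have i: "x - 1 < length ws" using len by auto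
  then show "ws ! (x - 1) \<in> carrier_vec N" using ws by auto
  show "ws ! (x - 1) \<noteq> 0\<^sub>v N"
    using corthogonalD[OF orth i i] by auto
next
  fix x y assume "x \<in> {1..N}" "y \<in> {1..N}" "x \<noteq> y"
  then have "x - 1 < length ws" "y - 1 < length ws" "x - 1 \<noteq> y - 1" using len by auto
  then show "ws ! (x - 1) \<bullet>c ws ! (y - 1) = 0" using corthogonalD[OF orth] by blast
next
  fix v :: "complex vec" assume v: "v \<in> carrier_vec N"
  define cf where "cf i = (v \<bullet>c ws!i) / (ws!i \<bullet>c ws!i)" for i
  have "v = vec N (\<lambda>r. \<Sum>i<N. cf i * (ws!i $ r))"
    using corthogonal_expansion[OF ws orth len v] unfolding cf_def .
  also have "\<dots> = vec N (\<lambda>r. \<Sum>x\<in>{1..N}. cf (x - 1) * (ws ! (x - 1) $ r))"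
    by (simp add: sum.atLeast1_atMost_eq)
  finally show "\<exists>c. v = vec N (\<lambda>r. \<Sum>x\<in>{1..N}. c x * (ws ! (x - 1) $ r))"
    by (intro exI[of _ "\<lambda>x. cf (x - 1)"])
qed

section \<open>Commuting entries versus pre-Latin squares\<close>

lemma pre_latin_square_Proj_commute:
  assumes L: "pre_latin_square M N L" and \<xi>: "orthogonal_basis N \<xi>"
    and P: "\<forall>i\<in>{1..M}. \<forall>j\<in>{1..M}. P i j = Proj N (\<xi> (L i j))"
  shows "\<forall>i\<in>{1..M}. \<forall>j\<in>{1..M}. \<forall>k\<in>{1..M}. \<forall>l\<in>{1..M}. P i j * P k l = P k l * P i j"
proof (intro ballI)
  fix i j k l assume ij: "i \<in> {1..M}" "j \<in> {1..M}" and kl: "k \<in> {1..M}" "l \<in> {1..M}"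
  have x: "L i j \<in> {1..N}" and y: "L k l \<in> {1..N}" using L ij kl unfolding pre_latin_square_def by auto
  have xc: "\<xi> (L i j) \<in> carrier_vec N" and yc: "\<xi> (L k l) \<in> carrier_vec N"
    using \<xi> x y unfolding orthogonal_basis_def by auto
  show "P i j * P k l = P k l * P i j"
  proof (cases "L i j = L k l")
    case True
    then show ?thesis using P ij kl by simp
  next
    case False
    then have "\<xi> (L i j) \<bullet>c \<xi> (L k l) = 0" "\<xi> (L k l) \<bullet>c \<xi> (L i j) = 0"
      using \<xi> x y unfolding orthogonal_basis_def by auto
    then show ?thesis using P ij kl Proj_mult_orthogonal[OF xc yc] Proj_mult_orthogonal[OF yc xc] by simp
  qed
qed

text \<open>Distinct commuting rank-one projections have orthogonal ranges, so their spanning vectors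
  form an orthogonal list, which Gram--Schmidt completes to an orthogonal basis.\<close>
lemma commuting_rank_one_projections_common_basis:
  fixes S :: "complex mat set"
  assumes S: "finite S" and r1: "\<forall>Q\<in>S. rank_one_projection N Q"
    and comm: "\<forall>Q1\<in>S. \<forall>Q2\<in>S. Q1 * Q2 = Q2 * Q1"
  obtains lab :: "complex mat \<Rightarrow> nat" and \<xi> :: "nat \<Rightarrow> complex vec" where "inj_on lab S" "lab ` S \<subseteq> {1..N}" "orthogonal_basis N \<xi>"
    "\<forall>Q\<in>S. Q = Proj N (\<xi> (lab Q))"
proof -
  obtain e where e: "bij_betw e {0..<card S} S" using ex_bij_betw_nat_finite[OF S] by blast
  define rep where "rep Q = (SOME v. v \<in> carrier_vec N \<and> v \<noteq> 0\<^sub>v N \<and> Q = Proj N v)" for Q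
  have rep: "rep Q \<in> carrier_vec N \<and> rep Q \<noteq> 0\<^sub>v N \<and> Q = Proj N (rep Q)" if "Q \<in> S" for Q
    unfolding rep_def
    by (rule someI_ex) (use rank_one_projection_eq_Proj[of N Q] r1 that in blast)
  define us where "us = map (rep \<circ> e) [0..<card S]"
  have eS: "e a \<in> S" if "a < card S" for a using e that by (auto dest: bij_betw_apply)
  have usc: "set us \<subseteq> carrier_vec N" unfolding us_def using rep eS by auto
  have orth: "corthogonal us"
  proof (rule corthogonalI)
    fix a b assume "a < length us" "b < length us"
    then have a: "a < card S" and b: "b < card S" unfolding us_def by auto
    note ra = rep[OF eS[OF a]] and rb = rep[OF eS[OF b]]
    show "(us ! a \<bullet>c us ! b = 0) = (a \<noteq> b)"
    proof (cases "a = b")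
      case True
      have "rep (e a) \<bullet>c rep (e a) \<noteq> 0" using cscalar_prod_self_neq_0 ra by blast
      then show ?thesis using True a unfolding us_def by simp
    next
      case False
      then have "e a \<noteq> e b" using e a b by (auto simp: bij_betw_def inj_on_def)
      moreover have "Proj N (rep (e a)) * Proj N (rep (e b)) = Proj N (rep (e b)) * Proj N (rep (e a))"
        using comm eS[OF a] eS[OF b] ra rb by metis
      ultimately have "rep (e a) \<bullet>c rep (e b) = 0"
        using commuting_Proj_eq_or_orthogonal[of "rep (e a)" N "rep (e b)"] ra rb by metis
      then show ?thesis using False a b unfolding us_def by simp
    qed
  qed
  obtain nw where nw: "set nw \<subseteq> carrier_vec N" "corthogonal (nw @ us)" "length (nw @ us) = N"
    using corthogonal_extend_to_length[OF usc orth] by blast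
  define lab where "lab Q = length nw + inv_into {0..<card S} e Q + 1" for Q
  define \<xi> where "\<xi> x = (nw @ us) ! (x - 1)" for x
  have inv: "bij_betw (inv_into {0..<card S} e) S {0..<card S}" using bij_betw_inv_into[OF e] .
  show thesis
  proof
    show "inj_on lab S" unfolding lab_def using inv by (intro inj_onI) (auto simp: bij_betw_def inj_on_def)
    show "lab ` S \<subseteq> {1..N}" unfolding lab_def using inv nw(3) by (auto simp: us_def dest: bij_betw_apply)
    show "orthogonal_basis N \<xi>"
      unfolding \<xi>_def using corthogonal_orthogonal_basis nw usc by (metis set_append Un_subset_iff)
    show "\<forall>Q\<in>S. Q = Proj N (\<xi> (lab Q))"
    proof
      fix Q assume Q: "Q \<in> S"
      have "inv_into {0..<card S} e Q < card S" using inv Q by (auto dest: bij_betw_apply)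
      then have "\<xi> (lab Q) = rep Q"
        unfolding \<xi>_def lab_def us_def using bij_betw_inv_into_right[OF e Q] by (simp add: nth_append)
      then show "Q = Proj N (\<xi> (lab Q))" using rep[OF Q] by simp
    qed
  qed
qed

lemma submagic_rank_one_mult_self_neq_0:
  assumes "rank_one_projection N Q"
  shows "Q * Q \<noteq> 0\<^sub>m N N"
proof -
  obtain v where "v \<in> carrier_vec N" "v \<noteq> 0\<^sub>v N" "Q = Proj N v"
    using rank_one_projection_eq_Proj assms by blast
  then show ?thesis using Proj_idem Proj_neq_0 by metis
qed

lemma commuting_submagic_pre_latin_square:
  assumes sub: "submagic M N P"
    and r1: "\<forall>i\<in>{1..M}. \<forall>j\<in>{1..M}. rank_one_projection N (P i j)"
    and comm: "\<forall>i\<in>{1..M}. \<forall>j\<in>{1..M}. \<forall>k\<in>{1..M}. \<forall>l\<in>{1..M}. P i j * P k l = P k l * P i j"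
  shows "\<exists>L \<xi>. pre_latin_square M N L \<and> orthogonal_basis N \<xi> \<and>
                (\<forall>i\<in>{1..M}. \<forall>j\<in>{1..M}. P i j = Proj N (\<xi> (L i j)))"
proof -
  define S where "S = (\<lambda>(i,j). P i j) ` ({1..M} \<times> {1..M})"
  obtain lab \<xi> where lab: "inj_on lab S" "lab ` S \<subseteq> {1..N}" and \<xi>: "orthogonal_basis N \<xi>"
    and P: "\<forall>Q\<in>S. Q = Proj N (\<xi> (lab Q))"
    using commuting_rank_one_projections_common_basis[of S N] r1 comm unfolding S_def by auto
  have PS: "P i j \<in> S" if "i \<in> {1..M}" "j \<in> {1..M}" for i j using that unfolding S_def by auto
  text \<open>Entries in a common row or column are distinct, because their product is zero while
    each entry is a nonzero idempotent.\<close>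
  have ne: "P i j \<noteq> P k l" if "i \<in> {1..M}" "j \<in> {1..M}" "P i j * P k l = 0\<^sub>m N N" for i j k l
    using that submagic_rank_one_mult_self_neq_0 r1 by metis
  have "pre_latin_square M N (\<lambda>i j. lab (P i j))"
    unfolding pre_latin_square_def
  proof (intro conjI ballI impI)
    fix i j assume "i \<in> {1..M}" "j \<in> {1..M}"
    then show "lab (P i j) \<in> {1..N}" using lab(2) PS by blast
  next
    fix i j k assume "i \<in> {1..M}" "j \<in> {1..M}" "k \<in> {1..M}" "j \<noteq> k"
    then show "lab (P i j) \<noteq> lab (P i k)"
      using ne sub lab(1) PS unfolding submagic_def by (metis inj_onD)
  next
    fix i j k assume "i \<in> {1..M}" "j \<in> {1..M}" "k \<in> {1..M}" "i \<noteq> k"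
    then show "lab (P i j) \<noteq> lab (P k j)"
      using ne sub lab(1) PS unfolding submagic_def by (metis inj_onD)
  qed
  then show ?thesis using \<xi> P PS by blast
qed

section \<open>The free *-algebra and the evaluation map rho\<close>

abbreviation falg_supp :: "falg \<Rightarrow> word set" where "falg_supp f \<equiv> {w. f w \<noteq> 0}"

definition chi_letter :: "(nat \<rightharpoonup> nat) \<Rightarrow> nat \<times> nat \<Rightarrow> complex" where
  "chi_letter \<sigma> p = (if \<sigma> (snd p) = Some (fst p) then 1 else 0)"

lemma chi_word_eq_prod_list: "chi_word w \<sigma> = prod_list (map (chi_letter \<sigma>) w)"
  unfolding chi_word_def chi_letter_def prod.list_conv_set_nth by (simp add: lessThan_atLeast0)

lemma chi_word_Nil [simp]: "chi_word [] \<sigma> = 1" by (simp add: chi_word_eq_prod_list)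
lemma chi_word_Cons [simp]: "chi_word (p # w) \<sigma> = chi_letter \<sigma> p * chi_word w \<sigma>" by (simp add: chi_word_eq_prod_list)
lemma chi_word_append: "chi_word (u @ v) \<sigma> = chi_word u \<sigma> * chi_word v \<sigma>" by (simp add: chi_word_eq_prod_list)
lemma chi_word_rev: "chi_word (rev u) \<sigma> = chi_word u \<sigma>" by (simp add: chi_word_eq_prod_list rev_map[symmetric] prod_list.rev)

lemma chi_letter_0_or_1: "chi_letter \<sigma> p = 0 \<or> chi_letter \<sigma> p = 1" by (simp add: chi_letter_def)
lemma chi_word_0_or_1: "chi_word w \<sigma> = 0 \<or> chi_word w \<sigma> = 1"
  by (induction w) (auto simp: chi_letter_def)

lemma cnj_chi_word [simp]: "cnj (chi_word w \<sigma>) = chi_word w \<sigma>"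
  using chi_word_0_or_1[of w \<sigma>] by auto

lemma falg_carrierD: "f \<in> falg_carrier M \<Longrightarrow> finite (falg_supp f)"
  "f \<in> falg_carrier M \<Longrightarrow> f w \<noteq> 0 \<Longrightarrow> set w \<subseteq> {1..M} \<times> {1..M}"
  unfolding falg_carrier_def by auto

lemma rho_eq_sum_superset:
  assumes "finite S" "falg_supp f \<subseteq> S"
  shows "rho f \<sigma> = (\<Sum>w\<in>S. f w * chi_word w \<sigma>)"
  unfolding rho_def using assms by (intro sum.mono_neutral_left) auto

lemma falg_supp_sum_subset: "falg_supp (\<lambda>w. \<Sum>i\<in>I. g i w) \<subseteq> (\<Union>i\<in>I. falg_supp (g i))"
proof
  fix w assume "w \<in> falg_supp (\<lambda>w. \<Sum>i\<in>I. g i w)"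
  hence "(\<Sum>i\<in>I. g i w) \<noteq> 0" by simp
  then obtain i where "i \<in> I" "g i w \<noteq> 0" by (meson sum.neutral)
  thus "w \<in> (\<Union>i\<in>I. falg_supp (g i))" by auto
qed

lemma rho_sum:
  assumes "finite I" "\<And>i. i \<in> I \<Longrightarrow> finite (falg_supp (g i))"
  shows "rho (\<lambda>w. \<Sum>i\<in>I. g i w) \<sigma> = (\<Sum>i\<in>I. rho (g i) \<sigma>)"
proof -
  define S where "S = (\<Union>i\<in>I. falg_supp (g i))"
  have fS: "finite S" unfolding S_def using assms by auto
  have sub: "falg_supp (\<lambda>w. \<Sum>i\<in>I. g i w) \<subseteq> S" unfolding S_def by (rule falg_supp_sum_subset)
  have "rho (\<lambda>w. \<Sum>i\<in>I. g i w) \<sigma> = (\<Sum>w\<in>S. (\<Sum>i\<in>I. g i w) * chi_word w \<sigma>)"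
    by (rule rho_eq_sum_superset[OF fS sub])
  also have "\<dots> = (\<Sum>w\<in>S. \<Sum>i\<in>I. g i w * chi_word w \<sigma>)"
    by (simp add: sum_distrib_right)
  also have "\<dots> = (\<Sum>i\<in>I. \<Sum>w\<in>S. g i w * chi_word w \<sigma>)"
    by (rule sum.swap)
  also have "\<dots> = (\<Sum>i\<in>I. rho (g i) \<sigma>)"
  proof (rule sum.cong[OF refl])
    fix i assume i: "i \<in> I"
    have "falg_supp (g i) \<subseteq> S" unfolding S_def using i by blast
    thus "(\<Sum>w\<in>S. g i w * chi_word w \<sigma>) = rho (g i) \<sigma>" using rho_eq_sum_superset[OF fS] by metis
  qed
  finally show ?thesis .
qed

lemma falg_supp_sum_finite:
  assumes "finite I" "\<And>i. i \<in> I \<Longrightarrow> finite (falg_supp (g i))"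
  shows "finite (falg_supp (\<lambda>w. \<Sum>i\<in>I. g i w))"
  using falg_supp_sum_subset[of g I] assms by (meson finite_UN_I finite_subset)

lemma falg_sum_carrier:
  assumes "finite I" "\<And>i. i \<in> I \<Longrightarrow> g i \<in> falg_carrier M"
  shows "(\<lambda>w. \<Sum>i\<in>I. g i w) \<in> falg_carrier M"
  unfolding falg_carrier_def
proof (intro CollectI conjI allI impI)
  show "finite (falg_supp (\<lambda>w. \<Sum>i\<in>I. g i w))"
    using falg_supp_sum_finite[OF assms(1)] assms(2) falg_carrierD(1) by blast
  fix w assume "(\<Sum>i\<in>I. g i w) \<noteq> 0"
  then obtain i where "i \<in> I" "g i w \<noteq> 0" by (meson sum.neutral)
  thus "set w \<subseteq> {1..M} \<times> {1..M}" using assms(2) falg_carrierD(2) by blast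
qed

definition falg_word :: "word \<Rightarrow> falg" where "falg_word a = (\<lambda>w. if w = a then 1 else 0)"

lemma rho_falg_word: "rho (falg_word a) \<sigma> = chi_word a \<sigma>"
  using rho_eq_sum_superset[of "{a}" "falg_word a"] by (auto simp: falg_word_def)

lemma falg_word_carrier: "set a \<subseteq> {1..M} \<times> {1..M} \<Longrightarrow> falg_word a \<in> falg_carrier M"
  unfolding falg_carrier_def falg_word_def by auto

lemma rho_add: "f \<in> falg_carrier M \<Longrightarrow> g \<in> falg_carrier M \<Longrightarrow> rho (falg_add f g) \<sigma> = rho f \<sigma> + rho g \<sigma>"
proof -
  assume f: "f \<in> falg_carrier M" and g: "g \<in> falg_carrier M"
  define S where "S = falg_supp f \<union> falg_supp g"
  have fS: "finite S" unfolding S_def using f g falg_carrierD by auto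
  have sub: "falg_supp (falg_add f g) \<subseteq> S" unfolding S_def falg_add_def by auto
  have "rho (falg_add f g) \<sigma> = (\<Sum>w\<in>S. (f w + g w) * chi_word w \<sigma>)"
    using rho_eq_sum_superset[OF fS sub] unfolding falg_add_def .
  also have "\<dots> = rho f \<sigma> + rho g \<sigma>"
    using rho_eq_sum_superset[OF fS, of f] rho_eq_sum_superset[OF fS, of g] unfolding S_def by (simp add: distrib_right sum.distrib)
  finally show ?thesis .
qed

lemma rho_smult: "f \<in> falg_carrier M \<Longrightarrow> rho (falg_smult c f) \<sigma> = c * rho f \<sigma>"
proof -
  assume f: "f \<in> falg_carrier M"
  have fS: "finite (falg_supp f)" using f falg_carrierD by auto
  have sub: "falg_supp (falg_smult c f) \<subseteq> falg_supp f" unfolding falg_smult_def by auto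
  have "rho (falg_smult c f) \<sigma> = (\<Sum>w\<in>falg_supp f. (c * f w) * chi_word w \<sigma>)"
    using rho_eq_sum_superset[OF fS sub] unfolding falg_smult_def .
  also have "\<dots> = c * rho f \<sigma>"
    using rho_eq_sum_superset[OF fS, of f] by (simp add: sum_distrib_left mult.assoc)
  finally show ?thesis .
qed

lemma falg_add_carrier: "f \<in> falg_carrier M \<Longrightarrow> g \<in> falg_carrier M \<Longrightarrow> falg_add f g \<in> falg_carrier M"
proof -
  assume f: "f \<in> falg_carrier M" and g: "g \<in> falg_carrier M"
  have "falg_supp (falg_add f g) \<subseteq> falg_supp f \<union> falg_supp g" unfolding falg_add_def by auto
  thus ?thesis using f g unfolding falg_carrier_def falg_add_def
    by (auto intro: finite_subset)
qed

lemma falg_smult_carrier: "f \<in> falg_carrier M \<Longrightarrow> falg_smult c f \<in> falg_carrier M"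
proof -
  assume f: "f \<in> falg_carrier M"
  have "falg_supp (falg_smult c f) \<subseteq> falg_supp f" unfolding falg_smult_def by auto
  thus ?thesis using f unfolding falg_carrier_def falg_smult_def
    by (auto intro: finite_subset)
qed

lemma falg_star_carrier: "f \<in> falg_carrier M \<Longrightarrow> falg_star f \<in> falg_carrier M"
proof -
  assume f: "f \<in> falg_carrier M"
  have sp: "falg_supp (falg_star f) = rev ` falg_supp f" unfolding falg_star_def
    by (auto simp: image_iff) (metis rev_rev_ident)
  show ?thesis unfolding falg_carrier_def
  proof (intro CollectI conjI allI impI)
    show "finite (falg_supp (falg_star f))" using sp f falg_carrierD(1) by auto
    fix w assume "falg_star f w \<noteq> 0"
    hence "f (rev w) \<noteq> 0" unfolding falg_star_def by auto
    hence "set (rev w) \<subseteq> {1..M} \<times> {1..M}" using f falg_carrierD(2) by blast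
    thus "set w \<subseteq> {1..M} \<times> {1..M}" by simp
  qed
qed

lemma rho_star: "f \<in> falg_carrier M \<Longrightarrow> rho (falg_star f) \<sigma> = cnj (rho f \<sigma>)"
proof -
  assume f: "f \<in> falg_carrier M"
  have fS: "finite (falg_supp f)" using f falg_carrierD by auto
  have sp: "falg_supp (falg_star f) = rev ` falg_supp f" unfolding falg_star_def
    by (auto simp: image_iff) (metis rev_rev_ident)
  have "rho (falg_star f) \<sigma> = (\<Sum>w\<in>rev ` falg_supp f. cnj (f (rev w)) * chi_word w \<sigma>)"
    using rho_eq_sum_superset[of "rev ` falg_supp f" "falg_star f"] fS sp unfolding falg_star_def by auto
  also have "\<dots> = (\<Sum>w\<in>falg_supp f. cnj (f w) * chi_word w \<sigma>)"
    by (subst sum.reindex) (auto simp: chi_word_rev)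
  also have "\<dots> = cnj (rho f \<sigma>)" using rho_eq_sum_superset[OF fS, of f] by simp
  finally show ?thesis .
qed

lemma rho_zero: "rho (\<lambda>w. 0) \<sigma> = 0" unfolding rho_def by simp
lemma falg_zero_carrier: "(\<lambda>w. 0) \<in> falg_carrier M" unfolding falg_carrier_def by simp

lemma splits_eq_take_drop: "{p. fst p @ snd p = w} = (\<lambda>k. (take k w, drop k w)) ` {0..length w}"
proof (rule Set.set_eqI)
  fix p
  show "p \<in> {p. fst p @ snd p = w} \<longleftrightarrow> p \<in> (\<lambda>k. (take k w, drop k w)) ` {0..length w}"
  proof
  assume "p \<in> {p. fst p @ snd p = w}"
  hence "fst p @ snd p = w" by simp
  hence "p = (take (length (fst p)) w, drop (length (fst p)) w)" "length (fst p) \<in> {0..length w}"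
    by (auto simp: prod_eq_iff)
  thus "p \<in> (\<lambda>k. (take k w, drop k w)) ` {0..length w}" by blast
  qed auto
qed

lemma falg_mult_eq_sum:
  assumes f: "finite (falg_supp f)" and g: "finite (falg_supp g)"
  shows "falg_mult f g w = (\<Sum>p\<in>falg_supp f \<times> falg_supp g. f (fst p) * g (snd p) * (if w = fst p @ snd p then 1 else 0))"
proof -
  define SP where "SP = {p. fst p @ snd p = w}"
  define h where "h p = f (fst p) * g (snd p)" for p
  have fSP: "finite SP" unfolding SP_def splits_eq_take_drop by simp
  have "(\<Sum>p\<in>falg_supp f \<times> falg_supp g. f (fst p) * g (snd p) * (if w = fst p @ snd p then 1 else 0))
      = (\<Sum>p\<in>falg_supp f \<times> falg_supp g. if p \<in> SP then h p else 0)"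
    unfolding SP_def h_def by (intro sum.cong) auto
  also have "\<dots> = (\<Sum>p\<in>(falg_supp f \<times> falg_supp g) \<inter> SP. h p)"
    using f g by (simp add: sum.inter_restrict)
  also have "\<dots> = (\<Sum>p\<in>SP. h p)"
    using fSP by (intro sum.mono_neutral_left) (auto simp: h_def)
  also have "\<dots> = (\<Sum>k\<in>{0..length w}. h (take k w, drop k w))"
    unfolding SP_def splits_eq_take_drop
    by (subst sum.reindex) (auto simp: inj_on_def min_def split: if_splits,
        metis length_take min.absorb2)
  also have "\<dots> = falg_mult f g w" unfolding falg_mult_def h_def by simp
  finally show ?thesis by simp
qed

lemma falg_supp_mult_subset:
  assumes f: "finite (falg_supp f)" and g: "finite (falg_supp g)"
  shows "falg_supp (falg_mult f g) \<subseteq> (\<lambda>p. fst p @ snd p) ` (falg_supp f \<times> falg_supp g)"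
proof
  fix w assume "w \<in> falg_supp (falg_mult f g)"
  hence "(\<Sum>p\<in>falg_supp f \<times> falg_supp g. f (fst p) * g (snd p) * (if w = fst p @ snd p then 1 else 0)) \<noteq> 0"
    using falg_mult_eq_sum[OF f g] by simp
  then obtain p where "p \<in> falg_supp f \<times> falg_supp g" "f (fst p) * g (snd p) * (if w = fst p @ snd p then 1 else 0) \<noteq> 0"
    by (meson sum.neutral)
  thus "w \<in> (\<lambda>p. fst p @ snd p) ` (falg_supp f \<times> falg_supp g)" by (auto split: if_splits)
qed

lemma falg_mult_carrier:
  assumes f: "f \<in> falg_carrier M" and g: "g \<in> falg_carrier M"
  shows "falg_mult f g \<in> falg_carrier M"
proof -
  have ff: "finite (falg_supp f)" and fg: "finite (falg_supp g)" using f g falg_carrierD by auto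
  note sub = falg_supp_mult_subset[OF ff fg]
  show ?thesis unfolding falg_carrier_def
  proof (intro CollectI conjI allI impI)
    show "finite (falg_supp (falg_mult f g))" using sub ff fg by (meson finite_SigmaI finite_imageI finite_subset)
    fix w assume "falg_mult f g w \<noteq> 0"
    then obtain u v where uv: "f u \<noteq> 0" "g v \<noteq> 0" "w = u @ v" using sub by auto
    thus "set w \<subseteq> {1..M} \<times> {1..M}" using falg_carrierD(2)[OF f uv(1)] falg_carrierD(2)[OF g uv(2)] by auto
  qed
qed

lemma rho_mult:
  assumes f: "f \<in> falg_carrier M" and g: "g \<in> falg_carrier M"
  shows "rho (falg_mult f g) \<sigma> = rho f \<sigma> * rho g \<sigma>"
proof -
  have ff: "finite (falg_supp f)" and fg: "finite (falg_supp g)" using f g falg_carrierD by auto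
  define T where "T = (\<lambda>p. fst p @ snd p) ` (falg_supp f \<times> falg_supp g)"
  have fT: "finite T" unfolding T_def using ff fg by simp
  have sub: "falg_supp (falg_mult f g) \<subseteq> T" unfolding T_def by (rule falg_supp_mult_subset[OF ff fg])
  have "rho (falg_mult f g) \<sigma> = (\<Sum>w\<in>T. falg_mult f g w * chi_word w \<sigma>)" by (rule rho_eq_sum_superset[OF fT sub])
  also have "\<dots> = (\<Sum>w\<in>T. \<Sum>p\<in>falg_supp f \<times> falg_supp g. f (fst p) * g (snd p) * (if w = fst p @ snd p then 1 else 0) * chi_word w \<sigma>)"
    by (simp add: falg_mult_eq_sum[OF ff fg] sum_distrib_right)
  also have "\<dots> = (\<Sum>p\<in>falg_supp f \<times> falg_supp g. \<Sum>w\<in>T. f (fst p) * g (snd p) * (if w = fst p @ snd p then 1 else 0) * chi_word w \<sigma>)"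
    by (rule sum.swap)
  also have "\<dots> = (\<Sum>p\<in>falg_supp f \<times> falg_supp g. f (fst p) * g (snd p) * chi_word (fst p @ snd p) \<sigma>)"
  proof (rule sum.cong[OF refl])
    fix p assume p: "p \<in> falg_supp f \<times> falg_supp g"
    have pT: "fst p @ snd p \<in> T" unfolding T_def using p by blast
    have "(\<Sum>w\<in>T. f (fst p) * g (snd p) * (if w = fst p @ snd p then 1 else 0) * chi_word w \<sigma>)
        = (\<Sum>w\<in>T. if w = fst p @ snd p then f (fst p) * g (snd p) * chi_word w \<sigma> else 0)"
      by (intro sum.cong) auto
    also have "\<dots> = f (fst p) * g (snd p) * chi_word (fst p @ snd p) \<sigma>"
      using fT pT by (simp add: sum.delta')
    finally show "(\<Sum>w\<in>T. f (fst p) * g (snd p) * (if w = fst p @ snd p then 1 else 0) * chi_word w \<sigma>)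
        = f (fst p) * g (snd p) * chi_word (fst p @ snd p) \<sigma>" .
  qed
  also have "\<dots> = (\<Sum>p\<in>falg_supp f \<times> falg_supp g. (f (fst p) * chi_word (fst p) \<sigma>) * (g (snd p) * chi_word (snd p) \<sigma>))"
    by (simp add: chi_word_append algebra_simps)
  also have "\<dots> = (\<Sum>u\<in>falg_supp f. \<Sum>v\<in>falg_supp g. (f u * chi_word u \<sigma>) * (g v * chi_word v \<sigma>))"
    by (simp add: sum.cartesian_product split_def)
  also have "\<dots> = rho f \<sigma> * rho g \<sigma>"
    unfolding rho_def by (simp add: sum_product)
  finally show ?thesis .
qed

definition falg_one :: falg where "falg_one = falg_word []"

lemma falg_gen_eq_falg_word: "falg_gen i j = falg_word [(i,j)]" unfolding falg_gen_def falg_word_def by simp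

lemma falg_one_carrier: "falg_one \<in> falg_carrier M" unfolding falg_one_def by (rule falg_word_carrier) simp
lemma rho_one: "rho falg_one \<sigma> = 1" unfolding falg_one_def rho_falg_word by simp
lemma falg_gen_carrier: "i \<in> {1..M} \<Longrightarrow> j \<in> {1..M} \<Longrightarrow> falg_gen i j \<in> falg_carrier M"
  unfolding falg_gen_eq_falg_word by (rule falg_word_carrier) simp
lemma rho_gen: "rho (falg_gen i j) \<sigma> = chi_letter \<sigma> (i,j)" unfolding falg_gen_eq_falg_word rho_falg_word by simp

lemma rho_gen_idempotent:
  assumes "i \<in> {1..M}" "j \<in> {1..M}"
  shows "rho (falg_add (falg_mult (falg_gen i j) (falg_gen i j)) (falg_smult (-1) (falg_gen i j))) \<sigma> = 0"
proof -
  have g: "falg_gen i j \<in> falg_carrier M" by (rule falg_gen_carrier[OF assms])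
  show ?thesis
    unfolding rho_add[OF falg_mult_carrier[OF g g] falg_smult_carrier[OF g]] rho_mult[OF g g]
      rho_smult[OF g] rho_gen
    using chi_letter_0_or_1[of \<sigma> "(i,j)"] by auto
qed

lemma rho_gen_same_column:
  assumes "i \<in> {1..M}" "j \<in> {1..M}" "k \<in> {1..M}" "i \<noteq> k"
  shows "rho (falg_mult (falg_gen i j) (falg_gen k j)) \<sigma> = 0"
  using assms unfolding rho_mult[OF falg_gen_carrier falg_gen_carrier, OF assms(1,2,3,2)] rho_gen chi_letter_def
  by auto

lemma rho_gen_same_row:
  assumes "i \<in> {1..M}" "j \<in> {1..M}" "k \<in> {1..M}" "j \<noteq> k" and \<sigma>: "inj_on \<sigma> (dom \<sigma>)"
  shows "rho (falg_mult (falg_gen i j) (falg_gen i k)) \<sigma> = 0"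
proof -
  have "\<not> (\<sigma> j = Some i \<and> \<sigma> k = Some i)"
    using \<sigma> \<open>j \<noteq> k\<close> unfolding inj_on_def by (metis domI)
  then show ?thesis
    unfolding rho_mult[OF falg_gen_carrier falg_gen_carrier, OF assms(1,2,1,3)] rho_gen chi_letter_def
    by auto
qed


section \<open>Partial permutations and the semigroup of a pre-Latin square\<close>

lemma partial_perm_map_comp:
  assumes s: "partial_perm M \<sigma>" and t: "partial_perm M \<tau>"
  shows "partial_perm M (\<sigma> \<circ>\<^sub>m \<tau>)"
  unfolding partial_perm_def
proof (intro conjI)
  show "dom (\<sigma> \<circ>\<^sub>m \<tau>) \<subseteq> {1..M}"
    using t unfolding partial_perm_def map_comp_def by (auto split: option.splits)
  show "ran (\<sigma> \<circ>\<^sub>m \<tau>) \<subseteq> {1..M}"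
    using s unfolding partial_perm_def map_comp_def ran_def by (auto split: option.splits)
  show "inj_on (\<sigma> \<circ>\<^sub>m \<tau>) (dom (\<sigma> \<circ>\<^sub>m \<tau>))"
  proof (rule inj_onI)
    fix j k assume j: "j \<in> dom (\<sigma> \<circ>\<^sub>m \<tau>)" and k: "k \<in> dom (\<sigma> \<circ>\<^sub>m \<tau>)"
      and eq: "(\<sigma> \<circ>\<^sub>m \<tau>) j = (\<sigma> \<circ>\<^sub>m \<tau>) k"
    have "(\<sigma> \<circ>\<^sub>m \<tau>) j \<noteq> None" using j by auto
    then obtain l where l: "\<tau> j = Some l" "\<sigma> l \<noteq> None" by (auto simp: map_comp_def split: option.splits)
    have "(\<sigma> \<circ>\<^sub>m \<tau>) k \<noteq> None" using k by auto
    then obtain l' where l': "\<tau> k = Some l'" "\<sigma> l' \<noteq> None" by (auto simp: map_comp_def split: option.splits)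
    have "\<sigma> l = \<sigma> l'" using eq l l' by simp
    hence "l = l'" using s l l' unfolding partial_perm_def inj_on_def by (simp add: domIff)
    hence "\<tau> j = \<tau> k" using l l' by simp
    moreover have "j \<in> dom \<tau>" "k \<in> dom \<tau>" using l l' by auto
    ultimately show "j = k" using t unfolding partial_perm_def inj_on_def by blast
  qed
qed


lemma finite_partial_perms: "finite {\<sigma>. partial_perm M \<sigma>}"
proof -
  have "{\<sigma>. partial_perm M \<sigma>} \<subseteq> (\<Union>D\<in>Pow {1..M}. {m. dom m = D \<and> ran m \<subseteq> {1..M}})"
    unfolding partial_perm_def by auto
  moreover have "finite (\<Union>D\<in>Pow {1..M}. {m. dom m = D \<and> ran m \<subseteq> {1..M::nat}})"
    by (intro finite_UN_I) (auto intro: finite_set_of_finite_maps finite_subset)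
  ultimately show ?thesis by (rule finite_subset)
qed


lemma partial_perm_eqI:
  assumes s: "partial_perm M \<sigma>" and t: "partial_perm M \<tau>"
    and eq: "\<forall>i\<in>{1..M}. \<forall>j\<in>{1..M}. (\<sigma> j = Some i) = (\<tau> j = Some i)"
  shows "\<sigma> = \<tau>"
proof
  fix j
  show "\<sigma> j = \<tau> j"
  proof (cases "j \<in> {1..M}")
    case False
    then have "j \<notin> dom \<sigma>" "j \<notin> dom \<tau>" using s t unfolding partial_perm_def by auto
    then show ?thesis by (simp add: domIff)
  next
    case True
    show ?thesis
    proof (cases "\<sigma> j")
      case None
      show ?thesis
      proof (cases "\<tau> j")
        case (Some i)
        then have "i \<in> {1..M}" using t unfolding partial_perm_def ran_def by auto
        then show ?thesis using eq[rule_format, of i j] True None Some by simp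
      qed (use None in simp)
    next
      case (Some i)
      then have "i \<in> {1..M}" using s unfolding partial_perm_def ran_def by auto
      then show ?thesis using eq[rule_format, of i j] True Some by simp
    qed
  qed
qed


locale pre_latin =
  fixes M N :: nat and L :: "nat \<Rightarrow> nat \<Rightarrow> nat"
  assumes pre_latin: "pre_latin_square M N L"
begin

abbreviation G :: "(nat \<rightharpoonup> nat) set" where "G \<equiv> assoc_semigroup M N L"

lemma the_row_of_label:
  assumes "j \<in> {1..M}" "k \<in> {1..M}" "L k j = x"
  shows "(THE i. i \<in> {1..M} \<and> L i j = x) = k"
  using pre_latin assms unfolding pre_latin_square_def by (intro the_equality) metis+

lemma sigma_L_SomeD:
  assumes "sigma_L M L x j = Some i"
  shows "i \<in> {1..M}" "j \<in> {1..M}" "L i j = x"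
  using assms the_row_of_label unfolding sigma_L_def by (auto split: if_splits)

lemma sigma_L_eq_Some_iff:
  assumes "i \<in> {1..M}" "j \<in> {1..M}"
  shows "sigma_L M L x j = Some i \<longleftrightarrow> L i j = x"
proof
  show "sigma_L M L x j = Some i \<Longrightarrow> L i j = x" using sigma_L_SomeD by blast
  show "L i j = x \<Longrightarrow> sigma_L M L x j = Some i"
    using assms the_row_of_label unfolding sigma_L_def by auto
qed

lemma partial_perm_sigma_L: "partial_perm M (sigma_L M L x)"
  unfolding partial_perm_def
proof (intro conjI)
  show "dom (sigma_L M L x) \<subseteq> {1..M}" using sigma_L_SomeD by blast
  show "ran (sigma_L M L x) \<subseteq> {1..M}" unfolding ran_def using sigma_L_SomeD by blast
  show "inj_on (sigma_L M L x) (dom (sigma_L M L x))"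
  proof (rule inj_onI)
    fix j k assume j: "j \<in> dom (sigma_L M L x)" and k: "k \<in> dom (sigma_L M L x)"
      and eq: "sigma_L M L x j = sigma_L M L x k"
    obtain i where i: "sigma_L M L x j = Some i" using j by auto
    hence i2: "sigma_L M L x k = Some i" using eq by simp
    have "L i j = x" "L i k = x" "i \<in> {1..M}" "j \<in> {1..M}" "k \<in> {1..M}"
      using sigma_L_SomeD[OF i] sigma_L_SomeD[OF i2] by auto
    thus "j = k" using pre_latin unfolding pre_latin_square_def by metis
  qed
qed


lemma partial_perm_G: "\<sigma> \<in> G \<Longrightarrow> partial_perm M \<sigma>"
  by (induction rule: assoc_semigroup.induct) (use partial_perm_sigma_L partial_perm_map_comp in blast)+

lemma finite_G: "finite G"
  using finite_partial_perms[of M] partial_perm_G by (metis mem_Collect_eq rev_finite_subset subsetI)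

lemma ran_G: "\<sigma> \<in> G \<Longrightarrow> ran \<sigma> \<subseteq> {1..M}"
  using partial_perm_G unfolding partial_perm_def by blast

end

section \<open>The comultiplication is dual to composition of partial permutations\<close>


definition label_lists :: "nat \<Rightarrow> nat \<Rightarrow> nat list set" where
  "label_lists M n = {xs. set xs \<subseteq> {1..M} \<and> length xs = n}"

text \<open>The terms of the comultiplication of the word w are the pairs
  (comult_left w ls, comult_right w ls), one for each list ls of intermediate indices.\<close>
definition comult_left :: "word \<Rightarrow> nat list \<Rightarrow> word" where
  "comult_left w ls = map2 (\<lambda>p l. (fst p, l)) w ls"
definition comult_right :: "word \<Rightarrow> nat list \<Rightarrow> word" where
  "comult_right w ls = map2 (\<lambda>p l. (l, snd p)) w ls"

lemma finite_label_lists: "finite (label_lists M n)"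
  unfolding label_lists_def by (rule finite_lists_length_eq) simp

lemma label_lists_0: "label_lists M 0 = {[]}" unfolding label_lists_def by auto

lemma label_lists_Suc: "label_lists M (Suc n) = (\<lambda>(l,ls). l # ls) ` ({1..M} \<times> label_lists M n)"
  unfolding label_lists_def
  by (auto simp: image_iff length_Suc_conv) 

lemma comult_left_Cons [simp]: "comult_left (p # w) (l # ls) = (fst p, l) # comult_left w ls" unfolding comult_left_def by simp
lemma comult_right_Cons [simp]: "comult_right (p # w) (l # ls) = (l, snd p) # comult_right w ls" unfolding comult_right_def by simp
lemma comult_left_Nil [simp]: "comult_left [] ls = []" "comult_left w [] = []" unfolding comult_left_def by auto
lemma comult_right_Nil [simp]: "comult_right [] ls = []" "comult_right w [] = []" unfolding comult_right_def by auto

lemma falg_comult_neq_0D: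
  assumes "falg_comult M f (a,b) \<noteq> 0"
  shows "\<exists>w ls. f w \<noteq> 0 \<and> ls \<in> label_lists M (length w) \<and> a = comult_left w ls \<and> b = comult_right w ls"
proof -
  define w where "w = map2 (\<lambda>x y. (fst x, snd y)) a b"
  define ls where "ls = map snd a"
  have c: "length a = length b" "\<forall>t<length a. snd (a ! t) = fst (b ! t) \<and> snd (a ! t) \<in> {1..M}"
    and fw: "f w \<noteq> 0"
    using assms unfolding falg_comult_def w_def by (auto split: if_splits)
  have lw: "length w = length a" unfolding w_def using c by simp
  have "set ls \<subseteq> {1..M}"
  proof
    fix x assume "x \<in> set ls"
    then obtain t where "t < length a" "x = snd (a!t)" unfolding ls_def by (auto simp: in_set_conv_nth)
    then show "x \<in> {1..M}" using c by auto
  qed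
  hence ls: "ls \<in> label_lists M (length w)" unfolding label_lists_def ls_def using c lw by simp
  have "a = comult_left w ls" unfolding comult_left_def ls_def w_def
    by (rule nth_equalityI) (use c in \<open>auto simp: prod_eq_iff\<close>)
  moreover have "b = comult_right w ls" unfolding comult_right_def ls_def w_def
    by (rule nth_equalityI) (use c in auto)
  ultimately show ?thesis using fw ls by blast
qed

lemma falg_comult_left_right:
  assumes "ls \<in> label_lists M (length w)"
  shows "falg_comult M f (comult_left w ls, comult_right w ls) = f w"
proof -
  have l: "length ls = length w" "set ls \<subseteq> {1..M}" using assms unfolding label_lists_def by auto
  have m1: "map2 (\<lambda>x y. (fst x, snd y)) (comult_left w ls) (comult_right w ls) = w"
    by (rule nth_equalityI) (use l in \<open>auto simp: comult_left_def comult_right_def\<close>)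
  have m2: "\<forall>t<length (comult_left w ls). snd (comult_left w ls ! t) = fst (comult_right w ls ! t) \<and> snd (comult_left w ls ! t) \<in> {1..M}"
  proof -
    have lt: "\<And>t. t < length w \<Longrightarrow> ls!t \<in> {1..M}" using l nth_mem by (metis subsetD)
    show ?thesis using l lt by (auto simp: comult_left_def comult_right_def)
  qed
  have m3: "length (comult_left w ls) = length (comult_right w ls)" by (simp add: comult_left_def comult_right_def)
  have cond: "length (comult_left w ls) = length (comult_right w ls) \<and> (\<forall>t<length (comult_left w ls). snd (comult_left w ls ! t) = fst (comult_right w ls ! t) \<and> snd (comult_left w ls ! t) \<in> {1..M})"
    using m2 m3 by blast
  show ?thesis unfolding falg_comult_def prod.case if_P[OF cond] m1 ..
qed

lemma inj_on_comult_left_right: "inj_on (\<lambda>(w,ls). (comult_left w ls, comult_right w ls)) (Sigma S (\<lambda>w. label_lists M (length w)))"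
proof (rule inj_onI, clarify)
  fix w ls w' ls'
  assume l: "ls \<in> label_lists M (length w)" "ls' \<in> label_lists M (length w')"
    and eqA: "comult_left w ls = comult_left w' ls'" and eqB: "comult_right w ls = comult_right w' ls'"
  have ll: "length ls = length w" "length ls' = length w'" using l unfolding label_lists_def by auto
  have len: "length w = length w'" using arg_cong[OF eqA, of length] ll by (simp add: comult_left_def)
  have "\<forall>t<length w. fst (w!t) = fst (w'!t) \<and> ls!t = ls'!t"
  proof (intro allI impI)
    fix t assume t: "t < length w"
    have "comult_left w ls ! t = comult_left w' ls' ! t" using eqA by simp
    thus "fst (w!t) = fst (w'!t) \<and> ls!t = ls'!t" using t ll len by (simp add: comult_left_def)
  qed
  moreover have "\<forall>t<length w. snd (w!t) = snd (w'!t)"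
  proof (intro allI impI)
    fix t assume t: "t < length w"
    have "comult_right w ls ! t = comult_right w' ls' ! t" using eqB by simp
    thus "snd (w!t) = snd (w'!t)" using t ll len by (simp add: comult_right_def)
  qed
  ultimately show "w = w' \<and> ls = ls'" using len ll
    by (auto intro!: nth_equalityI simp: prod_eq_iff)
qed

lemma sum_falg_comult:
  assumes f: "finite (falg_supp f)"
  shows "(\<Sum>p\<in>{p. falg_comult M f p \<noteq> 0}. falg_comult M f p * X p)
       = (\<Sum>w\<in>falg_supp f. f w * (\<Sum>ls\<in>label_lists M (length w). X (comult_left w ls, comult_right w ls)))"
proof -
  define D where "D = Sigma (falg_supp f) (\<lambda>w. label_lists M (length w))"
  define \<phi> where "\<phi> = (\<lambda>(w::word, ls::nat list). (comult_left w ls, comult_right w ls))"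
  have fD: "finite D" unfolding D_def using f finite_label_lists by auto
  have sub: "{p. falg_comult M f p \<noteq> 0} \<subseteq> \<phi> ` D"
  proof
    fix p assume "p \<in> {p. falg_comult M f p \<noteq> 0}"
    then obtain a b where p: "p = (a,b)" "falg_comult M f (a,b) \<noteq> 0" by (cases p) auto
    then obtain w ls where "f w \<noteq> 0" "ls \<in> label_lists M (length w)" "a = comult_left w ls" "b = comult_right w ls"
      using falg_comult_neq_0D by blast
    thus "p \<in> \<phi> ` D" unfolding D_def \<phi>_def using p by (auto simp: image_iff)
  qed
  have "(\<Sum>p\<in>{p. falg_comult M f p \<noteq> 0}. falg_comult M f p * X p) = (\<Sum>p\<in>\<phi> ` D. falg_comult M f p * X p)"
    using fD sub by (intro sum.mono_neutral_left) auto
  also have "\<dots> = (\<Sum>q\<in>D. falg_comult M f (\<phi> q) * X (\<phi> q))"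
    using inj_on_comult_left_right[of "falg_supp f" M] unfolding D_def \<phi>_def by (subst sum.reindex) auto
  also have "\<dots> = (\<Sum>q\<in>D. f (fst q) * X (\<phi> q))"
    unfolding D_def \<phi>_def by (intro sum.cong) (auto simp: falg_comult_left_right)
  also have "\<dots> = (\<Sum>(w,ls)\<in>D. f w * X (comult_left w ls, comult_right w ls))"
    unfolding \<phi>_def by (intro sum.cong) auto
  also have "\<dots> = (\<Sum>w\<in>falg_supp f. \<Sum>ls\<in>label_lists M (length w). f w * X (comult_left w ls, comult_right w ls))"
    unfolding D_def by (rule sum.Sigma[symmetric]) (use f finite_label_lists in auto)
  also have "\<dots> = (\<Sum>w\<in>falg_supp f. f w * (\<Sum>ls\<in>label_lists M (length w). X (comult_left w ls, comult_right w ls)))"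
    by (simp add: sum_distrib_left)
  finally show ?thesis .
qed

lemma sum_chi_letter_map_comp:
  assumes "ran \<tau> \<subseteq> {1..M}"
  shows "(\<Sum>l\<in>{1..M}. chi_letter \<sigma> (i,l) * chi_letter \<tau> (l,j)) = chi_letter (\<sigma> \<circ>\<^sub>m \<tau>) (i,j)"
proof (cases "\<tau> j")
  case None
  then show ?thesis by (simp add: chi_letter_def map_comp_def)
next
  case (Some l0)
  then have l0: "l0 \<in> {1..M}" using assms unfolding ran_def by auto
  have "(\<Sum>l\<in>{1..M}. chi_letter \<sigma> (i,l) * chi_letter \<tau> (l,j)) = (\<Sum>l\<in>{1..M}. if l = l0 then chi_letter \<sigma> (i,l0) else 0)"
    using Some by (intro sum.cong) (auto simp: chi_letter_def)
  also have "\<dots> = chi_letter \<sigma> (i,l0)" using l0 by simp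
  finally show ?thesis using Some by (simp add: chi_letter_def map_comp_def)
qed

lemma sum_chi_word_comult:
  assumes "ran \<tau> \<subseteq> {1..M}"
  shows "(\<Sum>ls\<in>label_lists M (length w). chi_word (comult_left w ls) \<sigma> * chi_word (comult_right w ls) \<tau>) = chi_word w (\<sigma> \<circ>\<^sub>m \<tau>)"
proof (induction w)
  case Nil
  then show ?case by (simp add: label_lists_0)
next
  case (Cons p w)
  have inj: "inj_on (\<lambda>(l,ls). l # ls) ({1..M} \<times> label_lists M (length w))" by (auto simp: inj_on_def)
  have LS: "label_lists M (length (p # w)) = (\<lambda>(l,ls). l # ls) ` ({1..M} \<times> label_lists M (length w))"
    by (simp add: label_lists_Suc)
  have "(\<Sum>ls\<in>label_lists M (length (p # w)). chi_word (comult_left (p # w) ls) \<sigma> * chi_word (comult_right (p # w) ls) \<tau>)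
      = (\<Sum>q\<in>{1..M} \<times> label_lists M (length w). chi_word (comult_left (p # w) ((\<lambda>(l,ls). l # ls) q)) \<sigma> * chi_word (comult_right (p # w) ((\<lambda>(l,ls). l # ls) q)) \<tau>)"
    unfolding LS sum.reindex[OF inj] o_def ..
  also have "\<dots> = (\<Sum>q\<in>{1..M} \<times> label_lists M (length w). chi_word (comult_left (p # w) (fst q # snd q)) \<sigma> * chi_word (comult_right (p # w) (fst q # snd q)) \<tau>)"
    by (simp add: split_def)
  also have "\<dots> = (\<Sum>q\<in>{1..M} \<times> label_lists M (length w). (chi_letter \<sigma> (fst p, fst q) * chi_letter \<tau> (fst q, snd p)) *
        (chi_word (comult_left w (snd q)) \<sigma> * chi_word (comult_right w (snd q)) \<tau>))"
    by (intro sum.cong) (auto simp: algebra_simps)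
  also have "\<dots> = (\<Sum>l\<in>{1..M}. chi_letter \<sigma> (fst p, l) * chi_letter \<tau> (l, snd p)) *
        (\<Sum>ls\<in>label_lists M (length w). chi_word (comult_left w ls) \<sigma> * chi_word (comult_right w ls) \<tau>)"
    by (simp add: sum_product sum.cartesian_product split_def)
  also have "\<dots> = chi_letter (\<sigma> \<circ>\<^sub>m \<tau>) p * chi_word w (\<sigma> \<circ>\<^sub>m \<tau>)"
    using sum_chi_letter_map_comp[OF assms, of \<sigma> "fst p" "snd p"] Cons by simp
  finally show ?case by simp
qed

lemma rho_map_comp:
  assumes f: "finite (falg_supp f)" and t: "ran \<tau> \<subseteq> {1..M}"
  shows "rho f (\<sigma> \<circ>\<^sub>m \<tau>) = (\<Sum>p\<in>{p. falg_comult M f p \<noteq> 0}.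
            falg_comult M f p * chi_word (fst p) \<sigma> * chi_word (snd p) \<tau>)"
proof -
  have "(\<Sum>p\<in>{p. falg_comult M f p \<noteq> 0}. falg_comult M f p * chi_word (fst p) \<sigma> * chi_word (snd p) \<tau>)
      = (\<Sum>p\<in>{p. falg_comult M f p \<noteq> 0}. falg_comult M f p * (chi_word (fst p) \<sigma> * chi_word (snd p) \<tau>))"
    by (simp add: mult.assoc)
  also have "\<dots> = (\<Sum>w\<in>falg_supp f. f w * (\<Sum>ls\<in>label_lists M (length w). chi_word (comult_left w ls) \<sigma> * chi_word (comult_right w ls) \<tau>))"
    using sum_falg_comult[OF f, of M "\<lambda>p. chi_word (fst p) \<sigma> * chi_word (snd p) \<tau>"] by simp
  also have "\<dots> = rho f (\<sigma> \<circ>\<^sub>m \<tau>)" unfolding rho_def using sum_chi_word_comult[OF t] by simp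
  finally show ?thesis by simp
qed


section \<open>Functions on a finite set of partial permutations are values of rho\<close>

definition point_factor :: "(nat \<rightharpoonup> nat) \<Rightarrow> nat \<times> nat \<Rightarrow> falg" where
  "point_factor \<tau> p = (if \<tau> (snd p) = Some (fst p) then falg_gen (fst p) (snd p)
              else falg_add falg_one (falg_smult (-1) (falg_gen (fst p) (snd p))))"

lemma point_factor_carrier: "p \<in> {1..M} \<times> {1..M} \<Longrightarrow> point_factor \<tau> p \<in> falg_carrier M"
  unfolding point_factor_def
  by (auto intro!: falg_gen_carrier falg_add_carrier falg_one_carrier falg_smult_carrier simp: mem_Times_iff)

lemma rho_point_factor: "p \<in> {1..M} \<times> {1..M} \<Longrightarrow>
  rho (point_factor \<tau> p) \<sigma> = (if \<tau> (snd p) = Some (fst p) then chi_letter \<sigma> p else 1 - chi_letter \<sigma> p)"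
proof -
  assume p: "p \<in> {1..M} \<times> {1..M}"
  have g: "falg_gen (fst p) (snd p) \<in> falg_carrier M" using p by (auto intro!: falg_gen_carrier simp: mem_Times_iff)
  show ?thesis unfolding point_factor_def
    using rho_add[OF falg_one_carrier falg_smult_carrier[OF g]] rho_smult[OF g] rho_one rho_gen by simp
qed

lemma falg_prod_carrier: "(\<forall>g\<in>set gs. g \<in> falg_carrier M) \<Longrightarrow> foldr falg_mult gs falg_one \<in> falg_carrier M"
  by (induction gs) (auto intro: falg_mult_carrier falg_one_carrier)

lemma rho_falg_prod: "(\<forall>g\<in>set gs. g \<in> falg_carrier M) \<Longrightarrow>
   rho (foldr falg_mult gs falg_one) \<sigma> = prod_list (map (\<lambda>g. rho g \<sigma>) gs)"
proof (induction gs)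
  case Nil then show ?case by (simp add: rho_one)
next
  case (Cons g gs)
  then show ?case using rho_mult[of g M "foldr falg_mult gs falg_one" \<sigma>] falg_prod_carrier[of gs M] by simp
qed

lemma prod_list_0_or_1: "(\<forall>x\<in>set xs. x = 0 \<or> x = (1::complex)) \<Longrightarrow>
   prod_list xs = (if \<forall>x\<in>set xs. x = 1 then 1 else 0)"
  by (induction xs) auto

definition index_pairs :: "nat \<Rightarrow> (nat \<times> nat) list" where
  "index_pairs M = List.product [1..<M+1] [1..<M+1]"

lemma set_index_pairs: "set (index_pairs M) = {1..M} \<times> {1..M}"
  unfolding index_pairs_def by auto

text \<open>The product over all index pairs (i, j) of u_ij or 1 - u_ij, according as \<tau> j = i or not,
  evaluates under rho to the indicator function of \<tau>.\<close>
definition falg_point :: "nat \<Rightarrow> (nat \<rightharpoonup> nat) \<Rightarrow> falg" where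
  "falg_point M \<tau> = foldr falg_mult (map (point_factor \<tau>) (index_pairs M)) falg_one"

lemma falg_point_carrier: "falg_point M \<tau> \<in> falg_carrier M"
  unfolding falg_point_def by (rule falg_prod_carrier) (auto simp: set_index_pairs intro: point_factor_carrier)

lemma rho_falg_point:
  assumes s: "partial_perm M \<sigma>" and t: "partial_perm M \<tau>"
  shows "rho (falg_point M \<tau>) \<sigma> = (if \<sigma> = \<tau> then 1 else 0)"
proof -
  define r where "r p = (if \<tau> (snd p) = Some (fst p) then chi_letter \<sigma> p else 1 - chi_letter \<sigma> p)" for p
  have "rho (falg_point M \<tau>) \<sigma> = prod_list (map (\<lambda>g. rho g \<sigma>) (map (point_factor \<tau>) (index_pairs M)))"
    unfolding falg_point_def by (rule rho_falg_prod) (auto simp: set_index_pairs intro: point_factor_carrier)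
  also have "\<dots> = prod_list (map r (index_pairs M))"
    unfolding r_def by (intro arg_cong[where f=prod_list]) (auto simp: set_index_pairs rho_point_factor)
  also have "\<dots> = (if \<forall>x\<in>set (map r (index_pairs M)). x = 1 then 1 else 0)"
    by (rule prod_list_0_or_1) (auto simp: r_def chi_letter_def split: if_splits)
  also have "(\<forall>x\<in>set (map r (index_pairs M)). x = 1) \<longleftrightarrow> \<sigma> = \<tau>"
  proof
    assume all: "\<forall>x\<in>set (map r (index_pairs M)). x = 1"
    have "\<forall>i\<in>{1..M}. \<forall>j\<in>{1..M}. (\<sigma> j = Some i) = (\<tau> j = Some i)"
    proof (intro ballI)
      fix i j assume "i \<in> {1..M}" "j \<in> {1..M}"
      hence "(i,j) \<in> set (index_pairs M)" by (simp add: set_index_pairs)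
      hence "r (i,j) = 1" using all by auto
      thus "(\<sigma> j = Some i) = (\<tau> j = Some i)" unfolding r_def chi_letter_def by (auto split: if_splits)
    qed
    thus "\<sigma> = \<tau>" using partial_perm_eqI[OF s t] by blast
  next
    assume "\<sigma> = \<tau>"
    thus "\<forall>x\<in>set (map r (index_pairs M)). x = 1" by (auto simp: r_def chi_letter_def)
  qed
  finally show ?thesis by simp
qed

definition falg_interpolant :: "nat \<Rightarrow> (nat \<rightharpoonup> nat) set \<Rightarrow> ((nat \<rightharpoonup> nat) \<Rightarrow> complex) \<Rightarrow> falg" where
  "falg_interpolant M S h = (\<lambda>w. \<Sum>\<tau>\<in>S. falg_smult (h \<tau>) (falg_point M \<tau>) w)"

lemma falg_interpolant_carrier:
  assumes "finite S"
  shows "falg_interpolant M S h \<in> falg_carrier M"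
  unfolding falg_interpolant_def by (rule falg_sum_carrier[OF assms falg_smult_carrier[OF falg_point_carrier]])

lemma rho_falg_interpolant:
  assumes S: "finite S" "\<And>\<tau>. \<tau> \<in> S \<Longrightarrow> partial_perm M \<tau>" and \<sigma>: "\<sigma> \<in> S"
  shows "rho (falg_interpolant M S h) \<sigma> = h \<sigma>"
proof -
  have "rho (falg_interpolant M S h) \<sigma> = (\<Sum>\<tau>\<in>S. rho (falg_smult (h \<tau>) (falg_point M \<tau>)) \<sigma>)"
    unfolding falg_interpolant_def
    by (rule rho_sum[OF S(1) falg_carrierD(1)[OF falg_smult_carrier[OF falg_point_carrier]]])
  also have "\<dots> = (\<Sum>\<tau>\<in>S. if \<tau> = \<sigma> then h \<sigma> else 0)"
    by (intro sum.cong refl) (auto simp: rho_smult[OF falg_point_carrier] rho_falg_point S(2) \<sigma>)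
  also have "\<dots> = h \<sigma>" using S(1) \<sigma> by simp
  finally show ?thesis .
qed

section \<open>The representation pi_P in an orthogonal basis\<close>

locale orth_basis =
  fixes N :: nat and \<xi> :: "nat \<Rightarrow> complex vec"
  assumes basis: "orthogonal_basis N \<xi>"
begin

lemma xi_carrier: "x \<in> {1..N} \<Longrightarrow> \<xi> x \<in> carrier_vec N"
  using basis unfolding orthogonal_basis_def by auto

lemma xi_neq_0: "x \<in> {1..N} \<Longrightarrow> \<xi> x \<noteq> 0\<^sub>v N"
  using basis unfolding orthogonal_basis_def by auto

lemma xi_orth: "x \<in> {1..N} \<Longrightarrow> y \<in> {1..N} \<Longrightarrow> x \<noteq> y \<Longrightarrow> \<xi> x \<bullet>c \<xi> y = 0"
  using basis unfolding orthogonal_basis_def by auto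

lemma xi_cnorm_neq_0: "x \<in> {1..N} \<Longrightarrow> \<xi> x \<bullet>c \<xi> x \<noteq> 0"
  by (rule cscalar_prod_self_neq_0[OF xi_carrier xi_neq_0])

lemma sum_Proj_basis_eq_one:
  assumes r: "r < N" and c: "c < N"
  shows "(1\<^sub>m N :: complex mat) $$ (r,c) = (\<Sum>x\<in>{1..N}. Proj N (\<xi> x) $$ (r,c))"
proof -
  define e :: "complex vec" where "e = unit_vec N c"
  have ec: "e \<in> carrier_vec N" unfolding e_def by simp
  obtain cf where cf: "e = vec N (\<lambda>r. \<Sum>x\<in>{1..N}. cf x * (\<xi> x $ r))"
    using basis ec unfolding orthogonal_basis_def by blast
  have cfy: "cf y = cnj (\<xi> y $ c) / (\<xi> y \<bullet>c \<xi> y)" if y: "y \<in> {1..N}" for y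
  proof -
    have "cnj (\<xi> y $ c) = (\<Sum>k<N. e $ k * cnj (\<xi> y $ k))"
    proof -
      have "(\<Sum>k<N. e $ k * cnj (\<xi> y $ k)) = (\<Sum>k<N. if k = c then cnj (\<xi> y $ c) else 0)"
        unfolding e_def by (intro sum.cong) (auto simp: unit_vec_def)
      thus ?thesis using c by simp
    qed
    also have "\<dots> = (\<Sum>k<N. (\<Sum>x\<in>{1..N}. cf x * (\<xi> x $ k)) * cnj (\<xi> y $ k))"
      by (intro sum.cong refl) (subst cf, simp)
    also have "\<dots> = (\<Sum>k<N. \<Sum>x\<in>{1..N}. cf x * ((\<xi> x $ k) * cnj (\<xi> y $ k)))"
      by (simp add: sum_distrib_right mult.assoc)
    also have "\<dots> = (\<Sum>x\<in>{1..N}. \<Sum>k<N. cf x * ((\<xi> x $ k) * cnj (\<xi> y $ k)))"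
      by (rule sum.swap)
    also have "\<dots> = (\<Sum>x\<in>{1..N}. cf x * (\<xi> x \<bullet>c \<xi> y))"
      by (intro sum.cong refl) (simp add: sum_distrib_left cscalar_prod_eq_sum[OF xi_carrier xi_carrier[OF y]])
    also have "\<dots> = (\<Sum>x\<in>{1..N}. if x = y then cf y * (\<xi> y \<bullet>c \<xi> y) else 0)"
    proof (intro sum.cong refl)
      fix x assume x: "x \<in> {1..N}"
      show "cf x * (\<xi> x \<bullet>c \<xi> y) = (if x = y then cf y * (\<xi> y \<bullet>c \<xi> y) else 0)"
        using xi_orth[OF x y] by (cases "x = y") simp_all
    qed
    also have "\<dots> = cf y * (\<xi> y \<bullet>c \<xi> y)" using y by simp
    finally have "cnj (\<xi> y $ c) = cf y * (\<xi> y \<bullet>c \<xi> y)" .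
    thus ?thesis using xi_cnorm_neq_0[OF y] by (simp add: eq_divide_eq)
  qed
  have "(1\<^sub>m N :: complex mat) $$ (r,c) = e $ r" unfolding e_def using r c by simp
  also have "\<dots> = (\<Sum>x\<in>{1..N}. cf x * (\<xi> x $ r))" using cf r by simp
  also have "\<dots> = (\<Sum>x\<in>{1..N}. Proj N (\<xi> x) $$ (r,c))"
    by (intro sum.cong refl) (simp add: cfy Proj_index r c)
  finally show ?thesis .
qed

lemma Proj_basis_mult:
  assumes x: "x \<in> {1..N}" and y: "y \<in> {1..N}" and r: "r < N" and c: "c < N"
  shows "(Proj N (\<xi> y) * Proj N (\<xi> x)) $$ (r,c) = (if x = y then Proj N (\<xi> y) $$ (r,c) else 0)"
proof (cases "x = y")
  case True
  then show ?thesis using Proj_idem[OF xi_carrier[OF y] xi_neq_0[OF y]] by simp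
next
  case False
  have "Proj N (\<xi> y) * Proj N (\<xi> x) = 0\<^sub>m N N"
    using Proj_mult_orthogonal[OF xi_carrier[OF y] xi_carrier[OF x] xi_orth[OF y x]] False by simp
  then show ?thesis using False r c by simp
qed

lemma Proj_basis_mult_combination:
  assumes y: "y \<in> {1..N}" and r: "r < N" and c: "c < N"
  shows "(\<Sum>k<N. Proj N (\<xi> y) $$ (r,k) * (\<Sum>x\<in>{1..N}. h x * Proj N (\<xi> x) $$ (k,c)))
    = h y * Proj N (\<xi> y) $$ (r,c)"
proof -
  have "(\<Sum>k<N. Proj N (\<xi> y) $$ (r,k) * (\<Sum>x\<in>{1..N}. h x * Proj N (\<xi> x) $$ (k,c)))
      = (\<Sum>k<N. \<Sum>x\<in>{1..N}. h x * (Proj N (\<xi> y) $$ (r,k) * Proj N (\<xi> x) $$ (k,c)))"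
    by (intro sum.cong refl) (simp add: sum_distrib_left algebra_simps)
  also have "\<dots> = (\<Sum>x\<in>{1..N}. \<Sum>k<N. h x * (Proj N (\<xi> y) $$ (r,k) * Proj N (\<xi> x) $$ (k,c)))"
    by (rule sum.swap)
  also have "\<dots> = (\<Sum>x\<in>{1..N}. h x * (Proj N (\<xi> y) * Proj N (\<xi> x)) $$ (r,c))"
    using r c by (intro sum.cong refl) (simp add: sum_distrib_left scalar_prod_def lessThan_atLeast0)
  also have "\<dots> = (\<Sum>x\<in>{1..N}. if x = y then h y * Proj N (\<xi> y) $$ (r,c) else 0)"
    by (intro sum.cong refl) (simp add: Proj_basis_mult[OF _ y r c])
  also have "\<dots> = h y * Proj N (\<xi> y) $$ (r,c)" using y by simp
  finally show ?thesis .
qed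

lemma Proj_basis_coeff_eq_0:
  assumes h: "\<forall>r<N. \<forall>c<N. (\<Sum>x\<in>{1..N}. h x * Proj N (\<xi> x) $$ (r,c)) = 0"
    and y: "y \<in> {1..N}"
  shows "h y = 0"
proof -
  have yc: "\<xi> y \<in> carrier_vec N" using xi_carrier[OF y] .
  obtain r where r: "r < N" "\<xi> y $ r \<noteq> 0"
    using xi_neq_0[OF y] yc by (metis carrier_vecD eq_vecI index_zero_vec(1) index_zero_vec(2))
  have "0 = (\<Sum>c<N. (\<Sum>x\<in>{1..N}. h x * Proj N (\<xi> x) $$ (r,c)) * \<xi> y $ c)"
    using h r by simp
  also have "\<dots> = (\<Sum>c<N. \<Sum>x\<in>{1..N}. (h x * Proj N (\<xi> x) $$ (r,c)) * \<xi> y $ c)"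
    by (simp add: sum_distrib_right)
  also have "\<dots> = (\<Sum>c<N. \<Sum>x\<in>{1..N}. (h x * \<xi> x $ r / (\<xi> x \<bullet>c \<xi> x)) * (\<xi> y $ c * cnj (\<xi> x $ c)))"
  proof (intro sum.cong refl)
    fix c x assume "c \<in> {..<N}"
    hence "c < N" by simp
    thus "(h x * Proj N (\<xi> x) $$ (r,c)) * \<xi> y $ c = (h x * \<xi> x $ r / (\<xi> x \<bullet>c \<xi> x)) * (\<xi> y $ c * cnj (\<xi> x $ c))"
      using r by (simp add: Proj_index)
  qed
  also have "\<dots> = (\<Sum>x\<in>{1..N}. \<Sum>c<N. (h x * \<xi> x $ r / (\<xi> x \<bullet>c \<xi> x)) * (\<xi> y $ c * cnj (\<xi> x $ c)))"
    by (rule sum.swap)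
  also have "\<dots> = (\<Sum>x\<in>{1..N}. (h x * \<xi> x $ r / (\<xi> x \<bullet>c \<xi> x)) * (\<xi> y \<bullet>c \<xi> x))"
    by (intro sum.cong refl) (simp add: sum_distrib_left cscalar_prod_eq_sum[OF yc xi_carrier])
  also have "\<dots> = (\<Sum>x\<in>{1..N}. if x = y then h y * \<xi> y $ r else 0)"
  proof (intro sum.cong refl)
    fix x assume x: "x \<in> {1..N}"
    show "(h x * \<xi> x $ r / (\<xi> x \<bullet>c \<xi> x)) * (\<xi> y \<bullet>c \<xi> x) = (if x = y then h y * \<xi> y $ r else 0)"
    proof (cases "x = y")
      case True thus ?thesis using xi_cnorm_neq_0[OF y] by simp
    next
      case False thus ?thesis using xi_orth[OF y x] by simp
    qed
  qed
  also have "\<dots> = h y * \<xi> y $ r" using y by simp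
  finally show ?thesis using r by simp
qed

end

locale pre_latin_model = pre_latin M N L + orth_basis N \<xi>
  for M N :: nat and L :: "nat \<Rightarrow> nat \<Rightarrow> nat" and \<xi> :: "nat \<Rightarrow> complex vec" +
  fixes P :: "nat \<Rightarrow> nat \<Rightarrow> complex mat"
  assumes P_eq: "\<forall>i\<in>{1..M}. \<forall>j\<in>{1..M}. P i j = Proj N (\<xi> (L i j))"
begin

lemma word_mat_eq_sum:
  assumes "set w \<subseteq> {1..M} \<times> {1..M}"
  shows "word_mat N P w \<in> carrier_mat N N \<and>
    (\<forall>r<N. \<forall>c<N. word_mat N P w $$ (r,c) = (\<Sum>x\<in>{1..N}. chi_word w (sigma_L M L x) * Proj N (\<xi> x) $$ (r,c)))"
  using assms
proof (induction w)
  case Nil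
  then show ?case using sum_Proj_basis_eq_one by (simp add: word_mat_def)
next
  case (Cons p w)
  obtain i j where p: "p = (i,j)" by (cases p)
  have ij: "i \<in> {1..M}" "j \<in> {1..M}" using Cons(2) p by auto
  have IH: "word_mat N P w \<in> carrier_mat N N"
    "\<And>r c. r < N \<Longrightarrow> c < N \<Longrightarrow> word_mat N P w $$ (r,c) = (\<Sum>x\<in>{1..N}. chi_word w (sigma_L M L x) * Proj N (\<xi> x) $$ (r,c))"
    using Cons by auto
  define y where "y = L i j"
  have y: "y \<in> {1..N}" using pre_latin ij unfolding y_def pre_latin_square_def by auto
  have Pij: "P i j = Proj N (\<xi> y)" using P_eq ij unfolding y_def by simp
  have wm: "word_mat N P (p # w) = P i j * word_mat N P w" unfolding word_mat_def p by simp
  have car: "word_mat N P (p # w) \<in> carrier_mat N N" unfolding wm Pij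
    by (rule mult_carrier_mat[OF Proj_carrier IH(1)])
  have "word_mat N P (p # w) $$ (r,c) = (\<Sum>x\<in>{1..N}. chi_word (p # w) (sigma_L M L x) * Proj N (\<xi> x) $$ (r,c))"
    if r: "r < N" and c: "c < N" for r c
  proof -
    have "word_mat N P (p # w) $$ (r,c) = (\<Sum>k<N. Proj N (\<xi> y) $$ (r,k) * word_mat N P w $$ (k,c))"
      unfolding wm Pij using IH(1) r c by (simp add: scalar_prod_def lessThan_atLeast0)
    also have "\<dots> = (\<Sum>k<N. Proj N (\<xi> y) $$ (r,k) *
        (\<Sum>x\<in>{1..N}. chi_word w (sigma_L M L x) * Proj N (\<xi> x) $$ (k,c)))"
      by (intro sum.cong refl) (simp add: IH(2) c)
    also have "\<dots> = chi_word w (sigma_L M L y) * Proj N (\<xi> y) $$ (r,c)"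
      by (rule Proj_basis_mult_combination[OF y r c])
    also have "\<dots> = (\<Sum>x\<in>{1..N}. chi_word (p # w) (sigma_L M L x) * Proj N (\<xi> x) $$ (r,c))"
    proof -
      have "chi_letter (sigma_L M L x) p = (if L i j = x then 1 else 0)" for x
        unfolding chi_letter_def p using sigma_L_eq_Some_iff[OF ij] by simp
      hence "(\<Sum>x\<in>{1..N}. chi_word (p # w) (sigma_L M L x) * Proj N (\<xi> x) $$ (r,c))
          = (\<Sum>x\<in>{1..N}. if x = y then chi_word w (sigma_L M L y) * Proj N (\<xi> y) $$ (r,c) else 0)"
        unfolding y_def by (intro sum.cong refl) auto
      thus ?thesis using y by simp
    qed
    finally show ?thesis .
  qed
  then show ?case using car by blast
qed

lemma pi_P_eq_sum:
  assumes f: "f \<in> falg_carrier M" and r: "r < N" and c: "c < N"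
  shows "pi_P N P f $$ (r,c) = (\<Sum>x\<in>{1..N}. rho f (sigma_L M L x) * Proj N (\<xi> x) $$ (r,c))"
proof -
  have "pi_P N P f $$ (r,c) = (\<Sum>w\<in>falg_supp f. f w * word_mat N P w $$ (r,c))"
    unfolding pi_P_def using r c by simp
  also have "\<dots> = (\<Sum>w\<in>falg_supp f. \<Sum>x\<in>{1..N}. f w * chi_word w (sigma_L M L x) * Proj N (\<xi> x) $$ (r,c))"
  proof (intro sum.cong refl)
    fix w assume "w \<in> falg_supp f"
    hence "set w \<subseteq> {1..M} \<times> {1..M}" using f falg_carrierD(2) by blast
    thus "f w * word_mat N P w $$ (r,c) = (\<Sum>x\<in>{1..N}. f w * chi_word w (sigma_L M L x) * Proj N (\<xi> x) $$ (r,c))"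
      using word_mat_eq_sum r c by (simp add: sum_distrib_left mult.assoc)
  qed
  also have "\<dots> = (\<Sum>x\<in>{1..N}. \<Sum>w\<in>falg_supp f. f w * chi_word w (sigma_L M L x) * Proj N (\<xi> x) $$ (r,c))"
    by (rule sum.swap)
  also have "\<dots> = (\<Sum>x\<in>{1..N}. rho f (sigma_L M L x) * Proj N (\<xi> x) $$ (r,c))"
    unfolding rho_def by (simp add: sum_distrib_right)
  finally show ?thesis .
qed

end


section \<open>The kernel of rho on G is the bialgebra kernel\<close>

lemma sum_tens_chi_word:
  assumes g: "finite (falg_supp g)" and h: "finite (falg_supp h)"
  shows "(\<Sum>p\<in>falg_supp g \<times> falg_supp h. g (fst p) * h (snd p) * chi_word (fst p) \<sigma> * chi_word (snd p) \<tau>)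
       = rho g \<sigma> * rho h \<tau>"
proof -
  have "(\<Sum>p\<in>falg_supp g \<times> falg_supp h. g (fst p) * h (snd p) * chi_word (fst p) \<sigma> * chi_word (snd p) \<tau>)
      = (\<Sum>p\<in>falg_supp g \<times> falg_supp h. (g (fst p) * chi_word (fst p) \<sigma>) * (h (snd p) * chi_word (snd p) \<tau>))"
    by (simp add: algebra_simps)
  also have "\<dots> = (\<Sum>u\<in>falg_supp g. \<Sum>v\<in>falg_supp h. (g u * chi_word u \<sigma>) * (h v * chi_word v \<tau>))"
    by (simp add: sum.cartesian_product split_def)
  also have "\<dots> = rho g \<sigma> * rho h \<tau>" unfolding rho_def by (simp add: sum_product)
  finally show ?thesis .
qed

lemma finite_falg_comult_supp:
  assumes f: "finite (falg_supp f)"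
  shows "finite {p. falg_comult M f p \<noteq> 0}"
proof -
  define D where "D = Sigma (falg_supp f) (\<lambda>w. label_lists M (length w))"
  have fD: "finite D" unfolding D_def using f finite_label_lists by auto
  have "{p. falg_comult M f p \<noteq> 0} \<subseteq> (\<lambda>(w,ls). (comult_left w ls, comult_right w ls)) ` D"
  proof
    fix p assume "p \<in> {p. falg_comult M f p \<noteq> 0}"
    then obtain a b where p: "p = (a,b)" "falg_comult M f (a,b) \<noteq> 0" by (cases p) auto
    then obtain w ls where "f w \<noteq> 0" "ls \<in> label_lists M (length w)" "a = comult_left w ls" "b = comult_right w ls"
      using falg_comult_neq_0D by blast
    thus "p \<in> (\<lambda>(w,ls). (comult_left w ls, comult_right w ls)) ` D" unfolding D_def using p by (auto simp: image_iff)
  qed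
  thus ?thesis using fD by (meson finite_imageI finite_subset)
qed

lemma falg_comult_letters:
  assumes f: "f \<in> falg_carrier M" and p: "falg_comult M f p \<noteq> 0"
  shows "set (fst p) \<subseteq> {1..M} \<times> {1..M}" "set (snd p) \<subseteq> {1..M} \<times> {1..M}"
proof -
  obtain a b where ab: "p = (a,b)" by (cases p)
  then obtain w ls where w: "f w \<noteq> 0" "ls \<in> label_lists M (length w)" "a = comult_left w ls" "b = comult_right w ls"
    using falg_comult_neq_0D p by blast
  have wl: "set w \<subseteq> {1..M} \<times> {1..M}" using falg_carrierD(2)[OF f w(1)] .
  have ls: "set ls \<subseteq> {1..M}" "length ls = length w" using w(2) unfolding label_lists_def by auto
  have "set (comult_left w ls) \<subseteq> {1..M} \<times> {1..M}"
  proof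
    fix q assume "q \<in> set (comult_left w ls)"
    then obtain t where t: "t < length w" "q = (fst (w!t), ls!t)" using ls unfolding comult_left_def by (auto simp: in_set_conv_nth)
    have "w!t \<in> {1..M} \<times> {1..M}" using t wl nth_mem by blast
    moreover have "ls!t \<in> {1..M}" using t ls nth_mem by (metis subsetD)
    ultimately show "q \<in> {1..M} \<times> {1..M}" using t by (auto simp: mem_Times_iff)
  qed
  moreover have "set (comult_right w ls) \<subseteq> {1..M} \<times> {1..M}"
  proof
    fix q assume "q \<in> set (comult_right w ls)"
    then obtain t where t: "t < length w" "q = (ls!t, snd (w!t))" using ls unfolding comult_right_def by (auto simp: in_set_conv_nth)
    have "w!t \<in> {1..M} \<times> {1..M}" using t wl nth_mem by blast
    moreover have "ls!t \<in> {1..M}" using t ls nth_mem by (metis subsetD)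
    ultimately show "q \<in> {1..M} \<times> {1..M}" using t by (auto simp: mem_Times_iff)
  qed
  ultimately show "set (fst p) \<subseteq> {1..M} \<times> {1..M}" "set (snd p) \<subseteq> {1..M} \<times> {1..M}" using ab w by auto
qed

lemma coideal_targetE:
  assumes "t \<in> coideal_target M I"
  obtains n :: nat and x y where "\<forall>k<n. x k \<in> falg_carrier M \<and> y k \<in> falg_carrier M \<and> (x k \<in> I \<or> y k \<in> I)"
    "t = (\<lambda>p. \<Sum>k<n. tens (x k) (y k) p)"
  using assms unfolding coideal_target_def by blast

lemma coideal_targetI:
  fixes n :: nat
  assumes "\<forall>k<n. x k \<in> falg_carrier M \<and> y k \<in> falg_carrier M \<and> (x k \<in> I \<or> y k \<in> I)"
    "t = (\<lambda>p. \<Sum>k<n. tens (x k) (y k) p)"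
  shows "t \<in> coideal_target M I"
  using assms unfolding coideal_target_def by blast

lemma admissible_idealD:
  assumes "admissible_ideal M N P I"
  shows "I \<subseteq> falg_carrier M" "\<forall>f\<in>I. falg_comult M f \<in> coideal_target M I"
    "\<forall>f\<in>I. pi_P N P f = 0\<^sub>m N N"
  using assms unfolding admissible_ideal_def by argo+

lemma rho_map_comp_tensor_sum:
  fixes n :: nat
  assumes f: "f \<in> falg_carrier M" and \<tau>: "ran \<tau> \<subseteq> {1..M}"
    and xy: "\<forall>k<n. x k \<in> falg_carrier M \<and> y k \<in> falg_carrier M"
    and cf: "falg_comult M f = (\<lambda>p. \<Sum>k<n. tens (x k) (y k) p)"
  shows "rho f (\<sigma> \<circ>\<^sub>m \<tau>) = (\<Sum>k<n. rho (x k) \<sigma> * rho (y k) \<tau>)"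
proof -
  define T where "T = {p. falg_comult M f p \<noteq> 0}"
  define U where "U = T \<union> (\<Union>k<n. falg_supp (x k) \<times> falg_supp (y k))"
  have fxy: "finite (falg_supp (x k))" "finite (falg_supp (y k))" if "k < n" for k
    using xy that falg_carrierD by blast+
  have fU: "finite U"
    unfolding U_def T_def using finite_falg_comult_supp[OF falg_carrierD(1)[OF f]] fxy by auto
  define X where "X p = chi_word (fst p) \<sigma> * chi_word (snd p) \<tau>" for p
  have "rho f (\<sigma> \<circ>\<^sub>m \<tau>) = (\<Sum>p\<in>T. falg_comult M f p * X p)"
    unfolding T_def X_def using rho_map_comp[OF falg_carrierD(1)[OF f] \<tau>] by (simp add: mult.assoc)
  also have "\<dots> = (\<Sum>p\<in>U. falg_comult M f p * X p)"
    using fU by (intro sum.mono_neutral_left) (auto simp: U_def T_def)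
  also have "\<dots> = (\<Sum>p\<in>U. \<Sum>k<n. x k (fst p) * y k (snd p) * X p)"
    unfolding cf tens_def by (simp add: split_def sum_distrib_right)
  also have "\<dots> = (\<Sum>k<n. \<Sum>p\<in>U. x k (fst p) * y k (snd p) * X p)"
    by (rule sum.swap)
  also have "\<dots> = (\<Sum>k<n. rho (x k) \<sigma> * rho (y k) \<tau>)"
  proof (intro sum.cong refl)
    fix k assume k: "k \<in> {..<n}"
    have "falg_supp (x k) \<times> falg_supp (y k) \<subseteq> U" unfolding U_def using k by blast
    then have "(\<Sum>p\<in>U. x k (fst p) * y k (snd p) * X p)
        = (\<Sum>p\<in>falg_supp (x k) \<times> falg_supp (y k). x k (fst p) * y k (snd p) * X p)"
      using fU by (intro sum.mono_neutral_right) auto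
    also have "\<dots> = rho (x k) \<sigma> * rho (y k) \<tau>"
      unfolding X_def using sum_tens_chi_word fxy k by (simp add: mult.assoc)
    finally show "(\<Sum>p\<in>U. x k (fst p) * y k (snd p) * X p) = rho (x k) \<sigma> * rho (y k) \<tau>" .
  qed
  finally show ?thesis .
qed

lemma coideal_target_sum:
  assumes T: "finite T"
    and xy: "\<forall>p\<in>T. x p \<in> falg_carrier M \<and> y p \<in> falg_carrier M \<and> (x p \<in> I \<or> y p \<in> I)"
  shows "(\<lambda>q. \<Sum>p\<in>T. tens (x p) (y p) q) \<in> coideal_target M I"
proof -
  obtain e where e: "bij_betw e {0..<card T} T" using ex_bij_betw_nat_finite[OF T] by blast
  have "(\<lambda>q. \<Sum>p\<in>T. tens (x p) (y p) q) = (\<lambda>q. \<Sum>k<card T. tens (x (e k)) (y (e k)) q)"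
    using sum.reindex_bij_betw[OF e, of "\<lambda>p. tens (x p) (y p) _"] by (simp add: lessThan_atLeast0)
  moreover have "\<forall>k<card T. x (e k) \<in> falg_carrier M \<and> y (e k) \<in> falg_carrier M \<and> (x (e k) \<in> I \<or> y (e k) \<in> I)"
    using xy bij_betw_apply[OF e] by auto
  ultimately show ?thesis by (intro coideal_targetI) auto
qed

context pre_latin_model
begin

abbreviation K :: "falg set" where "K \<equiv> {f \<in> falg_carrier M. \<forall>\<sigma>\<in>G. rho f \<sigma> = 0}"

lemma pi_P_eq_0_iff:
  assumes f: "f \<in> falg_carrier M"
  shows "pi_P N P f = 0\<^sub>m N N \<longleftrightarrow> (\<forall>x\<in>{1..N}. rho f (sigma_L M L x) = 0)"
proof
  assume z: "pi_P N P f = 0\<^sub>m N N"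
  have "\<forall>r<N. \<forall>c<N. (\<Sum>x\<in>{1..N}. rho f (sigma_L M L x) * Proj N (\<xi> x) $$ (r,c)) = 0"
  proof (intro allI impI)
    fix r c assume r: "r < N" and c: "c < N"
    have "pi_P N P f $$ (r,c) = 0" using z r c by simp
    thus "(\<Sum>x\<in>{1..N}. rho f (sigma_L M L x) * Proj N (\<xi> x) $$ (r,c)) = 0"
      using pi_P_eq_sum[OF f r c] by simp
  qed
  hence h: "\<forall>r<N. \<forall>c<N. (\<Sum>x\<in>{1..N}. (\<lambda>x. rho f (sigma_L M L x)) x * Proj N (\<xi> x) $$ (r,c)) = 0" by simp
  show "\<forall>x\<in>{1..N}. rho f (sigma_L M L x) = 0"
  proof
    fix x assume x: "x \<in> {1..N}"
    show "rho f (sigma_L M L x) = 0" using Proj_basis_coeff_eq_0[OF h x] by simp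
  qed
next
  assume h: "\<forall>x\<in>{1..N}. rho f (sigma_L M L x) = 0"
  show "pi_P N P f = 0\<^sub>m N N"
  proof (rule eq_matI)
    fix r c assume "r < dim_row (0\<^sub>m N N :: complex mat)" "c < dim_col (0\<^sub>m N N :: complex mat)"
    hence r: "r < N" and c: "c < N" by auto
    show "pi_P N P f $$ (r,c) = 0\<^sub>m N N $$ (r,c)"
      using pi_P_eq_sum[OF f r c] h r c by simp
  qed (simp_all add: pi_P_def)
qed


lemma admissible_ideal_subset_K:
  assumes I: "admissible_ideal M N P I"
  shows "I \<subseteq> K"
proof -
  note Ic = admissible_idealD(1)[OF I]
  have "rho f \<sigma> = 0" if "\<sigma> \<in> G" "f \<in> I" for \<sigma> f
    using that
  proof (induction arbitrary: f rule: assoc_semigroup.induct)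
    case (gen x)
    have "f \<in> falg_carrier M" "pi_P N P f = 0\<^sub>m N N"
      using gen(2) Ic admissible_idealD(3)[OF I] by blast+
    then show ?case using pi_P_eq_0_iff gen(1) by blast
  next
    case (mult \<sigma> \<tau>)
    have f: "f \<in> falg_carrier M" using mult(5) Ic by blast
    have "falg_comult M f \<in> coideal_target M I" using mult(5) admissible_idealD(2)[OF I] by blast
    then obtain n :: nat and x y
      where xy: "\<forall>k<n. x k \<in> falg_carrier M \<and> y k \<in> falg_carrier M \<and> (x k \<in> I \<or> y k \<in> I)"
        and cf: "falg_comult M f = (\<lambda>p. \<Sum>k<n. tens (x k) (y k) p)"
      by (rule coideal_targetE)
    have "rho f (\<sigma> \<circ>\<^sub>m \<tau>) = (\<Sum>k<n. rho (x k) \<sigma> * rho (y k) \<tau>)"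
      by (rule rho_map_comp_tensor_sum[OF f ran_G[OF mult(2)] _ cf]) (use xy in blast)
    also have "\<dots> = 0" using xy mult(3,4) by (intro sum.neutral) auto
    finally show ?case .
  qed
  then show ?thesis using Ic by blast
qed

lemma falg_word_minus_interpolant_in_K:
  assumes "set a \<subseteq> {1..M} \<times> {1..M}"
  shows "falg_smult c (falg_add (falg_word a) (falg_smult (-1) (falg_interpolant M G (chi_word a)))) \<in> K"
proof -
  have d: "falg_word a \<in> falg_carrier M" using falg_word_carrier[OF assms] .
  have i: "falg_interpolant M G (chi_word a) \<in> falg_carrier M"
    by (rule falg_interpolant_carrier[OF finite_G])
  have c1: "falg_add (falg_word a) (falg_smult (-1) (falg_interpolant M G (chi_word a))) \<in> falg_carrier M"
    by (rule falg_add_carrier[OF d falg_smult_carrier[OF i]])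
  have "rho (falg_smult c (falg_add (falg_word a) (falg_smult (-1) (falg_interpolant M G (chi_word a))))) \<sigma> = 0"
    if "\<sigma> \<in> G" for \<sigma>
    using rho_falg_interpolant[OF finite_G partial_perm_G that, of "chi_word a"]
    by (simp add: rho_smult[OF c1] rho_add[OF d falg_smult_carrier[OF i]] rho_smult[OF i] rho_falg_word)
  then show ?thesis using falg_smult_carrier[OF c1] by blast
qed

text \<open>Expanding both interpolants over G turns the sum into a combination of the values of
  rho f on products of elements of G, which vanish since G is closed under composition.\<close>
lemma comult_interpolants_vanish:
  assumes fK: "f \<in> K"
  shows "(\<Sum>p\<in>{p. falg_comult M f p \<noteq> 0}. falg_comult M f p *
      (falg_interpolant M G (chi_word (fst p)) a * falg_interpolant M G (chi_word (snd p)) b)) = 0"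
proof -
  have f: "f \<in> falg_carrier M" using fK by blast
  define T where "T = {p. falg_comult M f p \<noteq> 0}"
  define c where "c p = falg_comult M f p" for p
  define D where "D \<tau> \<tau>' = falg_point M \<tau> a * falg_point M \<tau>' b" for \<tau> \<tau>'
  have interp: "falg_interpolant M G h w = (\<Sum>\<tau>\<in>G. h \<tau> * falg_point M \<tau> w)" for h w
    unfolding falg_interpolant_def falg_smult_def ..
  have "(\<Sum>p\<in>T. c p * (falg_interpolant M G (chi_word (fst p)) a * falg_interpolant M G (chi_word (snd p)) b))
      = (\<Sum>p\<in>T. \<Sum>\<tau>\<in>G. \<Sum>\<tau>'\<in>G. c p * ((chi_word (fst p) \<tau> * falg_point M \<tau> a) *
          (chi_word (snd p) \<tau>' * falg_point M \<tau>' b)))"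
    unfolding interp sum_product by (simp only: sum_distrib_left)
  also have "\<dots> = (\<Sum>p\<in>T. \<Sum>\<tau>\<in>G. \<Sum>\<tau>'\<in>G. (c p * chi_word (fst p) \<tau> * chi_word (snd p) \<tau>') * D \<tau> \<tau>')"
    unfolding D_def by (intro sum.cong refl) (simp add: algebra_simps)
  also have "\<dots> = (\<Sum>\<tau>\<in>G. \<Sum>p\<in>T. \<Sum>\<tau>'\<in>G. (c p * chi_word (fst p) \<tau> * chi_word (snd p) \<tau>') * D \<tau> \<tau>')"
    by (rule sum.swap)
  also have "\<dots> = (\<Sum>\<tau>\<in>G. \<Sum>\<tau>'\<in>G. \<Sum>p\<in>T. (c p * chi_word (fst p) \<tau> * chi_word (snd p) \<tau>') * D \<tau> \<tau>')"
    by (intro sum.cong refl) (rule sum.swap)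
  also have "\<dots> = (\<Sum>\<tau>\<in>G. \<Sum>\<tau>'\<in>G. rho f (\<tau> \<circ>\<^sub>m \<tau>') * D \<tau> \<tau>')"
    unfolding T_def c_def
    by (intro sum.cong refl) (simp add: rho_map_comp[OF falg_carrierD(1)[OF f] ran_G] sum_distrib_right)
  also have "\<dots> = 0"
    using fK assoc_semigroup.mult by (intro sum.neutral ballI) fastforce
  finally show ?thesis unfolding T_def c_def .
qed

text \<open>With \<iota> a the interpolant of chi_word a, each term c (a \<otimes> b) of the comultiplication
  splits as c ((a - \<iota> a) \<otimes> b + \<iota> a \<otimes> (b - \<iota> b)) + c (\<iota> a \<otimes> \<iota> b). The first two
  tensors have a factor in K, and the last terms sum to zero.\<close>
lemma kernel_coideal:
  assumes fK: "f \<in> K"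
  shows "falg_comult M f \<in> coideal_target M K"
proof -
  have f: "f \<in> falg_carrier M" using fK by blast
  define T where "T = {p. falg_comult M f p \<noteq> 0}"
  have fT: "finite T" unfolding T_def by (rule finite_falg_comult_supp[OF falg_carrierD(1)[OF f]])
  have letters: "set (fst p) \<subseteq> {1..M} \<times> {1..M}" "set (snd p) \<subseteq> {1..M} \<times> {1..M}" if "p \<in> T" for p
    using falg_comult_letters[OF f] that unfolding T_def by auto
  define c where "c p = falg_comult M f p" for p :: "word \<times> word"
  define \<iota> where "\<iota> w = falg_interpolant M G (chi_word w)" for w
  define X where "X pb = (case pb of (p, True) \<Rightarrow> falg_smult (c p) (falg_add (falg_word (fst p)) (falg_smult (-1) (\<iota> (fst p))))
                                 | (p, False) \<Rightarrow> falg_smult (c p) (\<iota> (fst p)))"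
    for pb :: "(word \<times> word) \<times> bool"
  define Y where "Y pb = (case pb of (p, True) \<Rightarrow> falg_word (snd p)
                                 | (p, False) \<Rightarrow> falg_smult 1 (falg_add (falg_word (snd p)) (falg_smult (-1) (\<iota> (snd p)))))"
    for pb :: "(word \<times> word) \<times> bool"
  have mem: "\<forall>pb\<in>T \<times> UNIV. X pb \<in> falg_carrier M \<and> Y pb \<in> falg_carrier M \<and> (X pb \<in> K \<or> Y pb \<in> K)"
  proof
    fix pb assume "pb \<in> T \<times> (UNIV :: bool set)"
    then obtain p b where pb: "pb = (p, b)" "p \<in> T" by auto
    show "X pb \<in> falg_carrier M \<and> Y pb \<in> falg_carrier M \<and> (X pb \<in> K \<or> Y pb \<in> K)"
      using falg_word_minus_interpolant_in_K[OF letters(1)[OF pb(2)]]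
        falg_word_minus_interpolant_in_K[OF letters(2)[OF pb(2)]]
        falg_word_carrier[OF letters(2)[OF pb(2)]]
        falg_smult_carrier[OF falg_interpolant_carrier[OF finite_G]]
      unfolding pb X_def Y_def \<iota>_def by (cases b) auto
  qed
  have "falg_comult M f q = (\<Sum>pb\<in>T \<times> UNIV. tens (X pb) (Y pb) q)" for q
  proof -
    have pair_terms: "(\<Sum>b\<in>UNIV. tens (X (p, b)) (Y (p, b)) q)
        = c p * (falg_word (fst p) (fst q) * falg_word (snd p) (snd q))
          - c p * (\<iota> (fst p) (fst q) * \<iota> (snd p) (snd q))" for p
      unfolding X_def Y_def tens_def falg_smult_def falg_add_def UNIV_bool
      by (simp add: split_def algebra_simps)
    have "(\<Sum>p\<in>T. c p * (falg_word (fst p) (fst q) * falg_word (snd p) (snd q))) = falg_comult M f q"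
    proof -
      have "(\<Sum>p\<in>T. c p * (falg_word (fst p) (fst q) * falg_word (snd p) (snd q)))
          = (\<Sum>p\<in>T. if p = q then c q else 0)"
        by (intro sum.cong refl) (auto simp: falg_word_def prod_eq_iff)
      then show ?thesis using fT unfolding T_def c_def by auto
    qed
    moreover have "(\<Sum>p\<in>T. c p * (\<iota> (fst p) (fst q) * \<iota> (snd p) (snd q))) = 0"
      using comult_interpolants_vanish[OF fK] unfolding T_def c_def \<iota>_def .
    ultimately show ?thesis
      by (simp add: sum.cartesian_product' pair_terms sum_subtractf)
  qed
  then have "falg_comult M f = (\<lambda>q. \<Sum>pb\<in>T \<times> UNIV. tens (X pb) (Y pb) q)" by blast
  then show ?thesis using coideal_target_sum[OF _ mem] fT by simp
qed

lemma kernel_admissible: "admissible_ideal M N P K"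
  unfolding admissible_ideal_def
proof (intro conjI ballI allI impI)
  show "K \<subseteq> falg_carrier M" by blast
  show "(\<lambda>w. 0) \<in> K" using falg_zero_carrier rho_zero by blast
next
  fix f g assume "f \<in> K" "g \<in> K"
  then show "falg_add f g \<in> K" using falg_add_carrier[of f M g] rho_add[of f M g] by simp
next
  fix c f assume "f \<in> K"
  then show "falg_smult c f \<in> K" using falg_smult_carrier[of f M] rho_smult[of f M] by simp
next
  fix f g assume "f \<in> K" "g \<in> falg_carrier M"
  then show "falg_mult f g \<in> K" "falg_mult g f \<in> K"
    using falg_mult_carrier[of f M g] rho_mult[of f M g] falg_mult_carrier[of g M f] rho_mult[of g M f]
    by simp_all
next
  fix f assume "f \<in> K"
  then show "falg_star f \<in> K" using falg_star_carrier[of f M] rho_star[of f M] by simp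
next
  fix i j assume "i \<in> {1..M}" "j \<in> {1..M}"
  then show "falg_add (falg_mult (falg_gen i j) (falg_gen i j)) (falg_smult (-1) (falg_gen i j)) \<in> K"
    using rho_gen_idempotent falg_gen_carrier
    by (blast intro: falg_add_carrier falg_mult_carrier falg_smult_carrier)
next
  fix i j k assume "i \<in> {1..M}" "j \<in> {1..M}" "k \<in> {1..M}" "j \<noteq> k"
  then show "falg_mult (falg_gen i j) (falg_gen i k) \<in> K"
    using rho_gen_same_row partial_perm_G falg_gen_carrier unfolding partial_perm_def
    by (blast intro: falg_mult_carrier)
next
  fix i j k assume "i \<in> {1..M}" "j \<in> {1..M}" "k \<in> {1..M}" "i \<noteq> k"
  then show "falg_mult (falg_gen i j) (falg_gen k j) \<in> K"
    using rho_gen_same_column falg_gen_carrier by (blast intro: falg_mult_carrier)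
next
  fix f assume "f \<in> K"
  then show "falg_comult M f \<in> coideal_target M K" by (rule kernel_coideal)
next
  fix f assume f: "f \<in> K"
  then have "\<forall>x\<in>{1..N}. rho f (sigma_L M L x) = 0" using assoc_semigroup.gen by blast
  then show "pi_P N P f = 0\<^sub>m N N" using pi_P_eq_0_iff f by blast
qed

lemma bialgebra_image_is_CG: "bialgebra_image_is_CG M N P G"
  unfolding bialgebra_image_is_CG_def
proof (intro conjI allI ballI impI)
  fix h :: "(nat \<rightharpoonup> nat) \<Rightarrow> complex"
  show "\<exists>f\<in>falg_carrier M. \<forall>\<sigma>\<in>G. rho f \<sigma> = h \<sigma>"
    using falg_interpolant_carrier[OF finite_G] rho_falg_interpolant[OF finite_G partial_perm_G] by blast
next
  fix f \<sigma> \<tau> assume "f \<in> falg_carrier M" "\<sigma> \<in> G" "\<tau> \<in> G"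
  then show "rho f (\<sigma> \<circ>\<^sub>m \<tau>) = (\<Sum>p\<in>{p. falg_comult M f p \<noteq> 0}.
      falg_comult M f p * chi_word (fst p) \<sigma> * chi_word (snd p) \<tau>)"
    using rho_map_comp[OF falg_carrierD(1) ran_G] by blast
next
  show "admissible_ideal M N P K" by (rule kernel_admissible)
next
  fix I assume "admissible_ideal M N P I"
  then show "I \<subseteq> K" by (rule admissible_ideal_subset_K)
qed

end

theorem theorem2p6:
  fixes M N :: nat and P :: "nat \<Rightarrow> nat \<Rightarrow> complex mat"
  assumes "M \<le> N"
    and "submagic M N P"
    and "\<forall>i\<in>{1..M}. \<forall>j\<in>{1..M}. rank_one_projection N (P i j)"
  shows "((\<forall>i\<in>{1..M}. \<forall>j\<in>{1..M}. \<forall>k\<in>{1..M}. \<forall>l\<in>{1..M}. P i j * P k l = P k l * P i j)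
           \<longleftrightarrow> (\<exists>L \<xi>. pre_latin_square M N L \<and> orthogonal_basis N \<xi> \<and>
                   (\<forall>i\<in>{1..M}. \<forall>j\<in>{1..M}. P i j = Proj N (\<xi> (L i j)))))
         \<and> (\<forall>L \<xi>. pre_latin_square M N L \<and> orthogonal_basis N \<xi> \<and>
                (\<forall>i\<in>{1..M}. \<forall>j\<in>{1..M}. P i j = Proj N (\<xi> (L i j)))
           \<longrightarrow> bialgebra_image_is_CG M N P (assoc_semigroup M N L))"
proof (intro conjI allI impI)
  show "(\<forall>i\<in>{1..M}. \<forall>j\<in>{1..M}. \<forall>k\<in>{1..M}. \<forall>l\<in>{1..M}. P i j * P k l = P k l * P i j)
           \<longleftrightarrow> (\<exists>L \<xi>. pre_latin_square M N L \<and> orthogonal_basis N \<xi> \<and>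
                   (\<forall>i\<in>{1..M}. \<forall>j\<in>{1..M}. P i j = Proj N (\<xi> (L i j))))"
    using commuting_submagic_pre_latin_square[OF assms(2,3)] pre_latin_square_Proj_commute by blast
next
  fix L \<xi>
  assume "pre_latin_square M N L \<and> orthogonal_basis N \<xi> \<and>
    (\<forall>i\<in>{1..M}. \<forall>j\<in>{1..M}. P i j = Proj N (\<xi> (L i j)))"
  then interpret pre_latin_model M N L \<xi> P
    by unfold_locales blast+
  show "bialgebra_image_is_CG M N P (assoc_semigroup M N L)"
    by (rule bialgebra_image_is_CG)
qed

end
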